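(* For every compact set $K\subset\Omega$, $$H^N(K)=c_\Omega(K),$$ where $$c_\Omega(K)=\inf\Big\{\iint_{Q_T}|\partial_t\psi+\Delta\psi|\,dx\,dt:\ \psi\in C^{2,1}_{\ell,0}(\overline{Q_T}),\ \psi(x,0)\ge1\text{ for all }x\text{ in a neighborhood of }K\Big\}.$$
   Context: $\Omega\subset\mathbb{R}^N$ ($N\ge1$) is a bounded domain, $T>0$, $Q_T=\Omega\times(0,T)$, and $H^N$ is $N$-dimensional Hausdorff measure on $\mathbb{R}^N$. $C^{2,1}_{\ell,0}(\overline{Q_T})$ is the space of functions in $C^{2,1}(\overline{Q_T})$ (twice continuously differentiable in $x$, once in $t$, up to the boundary) vanishing on $\partial\Omega\times[0,T]\cup\overline\Omega\times\{T\}$. *)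

theory Defs
  imports "HOL-Analysis.Analysis"
begin

text \<open>Functions on Q_T are written as psi :: 'a => real => real (space variable x, time t).\<close>

definition dt :: "('a \<Rightarrow> real \<Rightarrow> real) \<Rightarrow> 'a \<Rightarrow> real \<Rightarrow> real" where
  "dt psi x t = deriv (\<lambda>s. psi x s) t"

definition dx :: "'a::real_normed_vector \<Rightarrow> ('a \<Rightarrow> real \<Rightarrow> real) \<Rightarrow> 'a \<Rightarrow> real \<Rightarrow> real" where
  "dx i psi x t = deriv (\<lambda>h. psi (x + h *\<^sub>R i) t) 0"

definition laplacian :: "('a::euclidean_space \<Rightarrow> real \<Rightarrow> real) \<Rightarrow> 'a \<Rightarrow> real \<Rightarrow> real" where
  "laplacian psi x t = (\<Sum>i\<in>Basis. dx i (dx i psi) x t)"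

definition ext_cont :: "'a::euclidean_space set \<Rightarrow> real \<Rightarrow> ('a \<Rightarrow> real \<Rightarrow> real) \<Rightarrow> bool" where
  "ext_cont Om T f \<longleftrightarrow> (\<exists>g. continuous_on (closure Om \<times> {0..T}) g \<and>
      (\<forall>x\<in>Om. \<forall>t\<in>{0<..<T}. g (x, t) = f x t))"

definition C21 :: "'a::euclidean_space set \<Rightarrow> real \<Rightarrow> ('a \<Rightarrow> real \<Rightarrow> real) \<Rightarrow> bool" where
  "C21 Om T psi \<longleftrightarrow>
     continuous_on (closure Om \<times> {0..T}) (\<lambda>(x, t). psi x t) \<and>
     (\<forall>x\<in>Om. \<forall>t\<in>{0<..<T}.
        (\<exists>D. ((\<lambda>s. psi x s) has_real_derivative D) (at t)) \<and>
        (\<forall>i\<in>Basis. \<exists>D. ((\<lambda>h. psi (x + h *\<^sub>R i) t) has_real_derivative D) (at 0)) \<and>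
        (\<forall>i\<in>Basis. \<forall>j\<in>Basis.
           \<exists>D. ((\<lambda>h. dx i psi (x + h *\<^sub>R j) t) has_real_derivative D) (at 0))) \<and>
     ext_cont Om T (dt psi) \<and>
     (\<forall>i\<in>Basis. ext_cont Om T (dx i psi)) \<and>
     (\<forall>i\<in>Basis. \<forall>j\<in>Basis. ext_cont Om T (dx j (dx i psi)))"

definition C21_l0 :: "'a::euclidean_space set \<Rightarrow> real \<Rightarrow> ('a \<Rightarrow> real \<Rightarrow> real) \<Rightarrow> bool" where
  "C21_l0 Om T psi \<longleftrightarrow> C21 Om T psi \<and>
     (\<forall>x\<in>frontier Om. \<forall>t\<in>{0..T}. psi x t = 0) \<and>
     (\<forall>x\<in>closure Om. psi x T = 0)"

definition cap :: "'a::euclidean_space set \<Rightarrow> real \<Rightarrow> 'a set \<Rightarrow> ennreal" where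
  "cap Om T K = (INF psi \<in> {psi. C21_l0 Om T psi \<and>
        (\<exists>U. open U \<and> K \<subseteq> U \<and> (\<forall>x\<in>U. psi x 0 \<ge> 1))}.
      \<integral>\<^sup>+ p. indicator (Om \<times> {0<..<T}) p *
              ennreal \<bar>dt psi (fst p) (snd p) + laplacian psi (fst p) (snd p)\<bar> \<partial>lborel)"

end

theory Submission
  imports Defs
begin

text \<open>
  Lower bound. Let \<open>\<psi>\<close> be admissible and let \<open>p = cutoff \<delta>\<close>, a smooth nondecreasing function with
  values in \<open>[0, 1]\<close> vanishing below \<open>\<delta>\<close>, with primitive \<open>P\<close>. Multiplying \<open>\<partial>\<^sub>t \<psi> + \<Delta> \<psi>\<close> by
  \<open>p(\<psi>)\<close> and integrating, the time derivative contributes \<open>-\<integral>\<^sub>\<Omega> P(\<psi>(x, 0)) dx\<close> because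
  \<open>\<psi>(\<cdot>, T) = 0\<close>, while integration by parts turns the Laplacian term into
  \<open>-\<integral>\<integral> p'(\<psi>) |\<nabla>\<psi>|\<^sup>2 \<le> 0\<close>; there is no boundary term since \<open>p(\<psi>)\<close> vanishes near \<open>\<partial>\<Omega>\<close>.
  Hence \<open>\<integral>\<^sub>\<Omega> P(\<psi>(x, 0)) dx \<le> \<integral>\<integral> |\<partial>\<^sub>t \<psi> + \<Delta> \<psi>|\<close>, and \<open>P(\<psi>(x, 0)) \<ge> 1 - 3 \<delta> / 2\<close> on \<open>K\<close>.

  Upper bound. Take \<open>\<psi>(x, t) = \<phi>(x) \<eta>(t)\<close>, where \<open>\<phi>\<close> has values in \<open>[0, 1]\<close>, equals \<open>1\<close> near
  \<open>K\<close> and vanishes outside an open \<open>V \<supseteq> K\<close> whose measure is close to that of \<open>K\<close>, and \<open>\<eta>\<close>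
  decreases from \<open>1\<close> to \<open>0\<close> on \<open>[0, \<tau>]\<close>. Then
  \<open>\<integral>\<integral> |\<partial>\<^sub>t \<psi> + \<Delta> \<psi>| \<le> |V| + \<tau> |\<Omega>| sup |\<Delta> \<phi>|\<close>, which is close to \<open>|K|\<close> for small \<open>\<tau>\<close>.
\<close>

section \<open>Piecewise polynomial step functions\<close>

lemma DERIV_from_one_sided:
  fixes f :: "real \<Rightarrow> real"
  assumes "(f has_field_derivative D) (at a within {..a})"
    and "(f has_field_derivative D) (at a within {a..})"
  shows "DERIV f a :> D"
proof -
  have "(f has_field_derivative D) (at a within ({..a} \<union> {a..}))"
    using assms unfolding has_field_derivative_def has_derivative_within
    by (auto simp: Lim_within_Un)
  moreover have "{..a} \<union> {a..} = (UNIV :: real set)"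
    by auto
  ultimately show ?thesis
    by simp
qed

lemma DERIV_if_le:
  fixes f g :: "real \<Rightarrow> real"
  assumes f: "\<And>x. DERIV f x :> f' x" and g: "\<And>x. DERIV g x :> g' x"
    and "f a = g a" "f' a = g' a"
  shows "DERIV (\<lambda>x. if x \<le> a then f x else g x) x :> (if x \<le> a then f' x else g' x)"
proof -
  consider "x < a" | "x = a" | "x > a"
    by linarith
  then show ?thesis
  proof cases
    case 1
    have "\<forall>\<^sub>F y in nhds x. y \<in> {..<a}"
      by (rule eventually_nhds_in_open) (use 1 in auto)
    then have "DERIV (\<lambda>x. if x \<le> a then f x else g x) x :> f' x \<longleftrightarrow> DERIV f x :> f' x"
      by (intro DERIV_cong_ev) (auto elim!: eventually_mono)
    then show ?thesis
      using f 1 by simp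
  next
    case 3
    have "\<forall>\<^sub>F y in nhds x. y \<in> {a<..}"
      by (rule eventually_nhds_in_open) (use 3 in auto)
    then have "DERIV (\<lambda>x. if x \<le> a then f x else g x) x :> g' x \<longleftrightarrow> DERIV g x :> g' x"
      by (intro DERIV_cong_ev) (auto elim!: eventually_mono)
    then show ?thesis
      using g 3 by simp
  next
    case 2
    have "((\<lambda>x. if x \<le> a then f x else g x) has_field_derivative f' a) (at a within {..a})"
      by (rule has_field_derivative_transform_within[where f=f and d=1])
        (use has_field_derivative_at_within[OF f] in auto)
    moreover have "((\<lambda>x. if x \<le> a then f x else g x) has_field_derivative f' a) (at a within {a..})"
      by (rule has_field_derivative_transform_within[where f=g and d=1])
        (use has_field_derivative_at_within[OF g] assms(3,4) in auto)
    ultimately show ?thesis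
      using 2 by (simp add: DERIV_from_one_sided)
  qed
qed

definition piecewise3 :: "(real \<Rightarrow> real) \<Rightarrow> (real \<Rightarrow> real) \<Rightarrow> (real \<Rightarrow> real) \<Rightarrow> real \<Rightarrow> real" where
  "piecewise3 f g h v = (if v \<le> 0 then f v else if v \<le> 1 then g v else h v)"

lemma DERIV_piecewise3:
  assumes "\<And>x. DERIV f x :> f' x" "\<And>x. DERIV g x :> g' x" "\<And>x. DERIV h x :> h' x"
    and "f 0 = g 0" "f' 0 = g' 0" "g 1 = h 1" "g' 1 = h' 1"
  shows "DERIV (piecewise3 f g h) v :> piecewise3 f' g' h' v"
  unfolding piecewise3_def[abs_def] using assms
  by (intro DERIV_if_le) auto

lemma continuous_on_piecewise3:
  assumes "continuous_on UNIV f" "continuous_on UNIV g" "continuous_on UNIV h"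
    and "f 0 = g 0" "g 1 = h 1"
  shows "continuous_on S (piecewise3 f g h)"
proof -
  have "continuous_on UNIV (\<lambda>v. if v \<le> 1 then g v else h v)"
    using assms by (intro continuous_on_cases_le continuous_on_id) (auto intro: continuous_on_subset)
  then have "continuous_on UNIV (piecewise3 f g h)"
    unfolding piecewise3_def[abs_def] using assms
    by (intro continuous_on_cases_le continuous_on_id) (auto intro: continuous_on_subset)
  then show ?thesis
    by (rule continuous_on_subset) simp
qed

definition smooth_step :: "real \<Rightarrow> real" where
  "smooth_step = piecewise3 (\<lambda>y. 0) (\<lambda>y. 10*y^3 - 15*y^4 + 6*y^5) (\<lambda>y. 1)"

definition smooth_step' :: "real \<Rightarrow> real" where
  "smooth_step' = piecewise3 (\<lambda>y. 0) (\<lambda>y. 30*y^2 - 60*y^3 + 30*y^4) (\<lambda>y. 0)"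

definition smooth_step'' :: "real \<Rightarrow> real" where
  "smooth_step'' = piecewise3 (\<lambda>y. 0) (\<lambda>y. 60*y - 180*y^2 + 120*y^3) (\<lambda>y. 0)"

definition smooth_ramp :: "real \<Rightarrow> real" where
  "smooth_ramp = piecewise3 (\<lambda>y. 0) (\<lambda>y. (5/2)*y^4 - 3*y^5 + y^6) (\<lambda>y. y - 1/2)"

lemma DERIV_smooth_ramp: "DERIV smooth_ramp v :> smooth_step v"
  unfolding smooth_ramp_def smooth_step_def
  by (rule DERIV_piecewise3) (auto intro!: derivative_eq_intros simp: algebra_simps)

lemma DERIV_smooth_step: "DERIV smooth_step v :> smooth_step' v"
  unfolding smooth_step_def smooth_step'_def
  by (rule DERIV_piecewise3) (auto intro!: derivative_eq_intros simp: algebra_simps)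

lemma DERIV_smooth_step': "DERIV smooth_step' v :> smooth_step'' v"
  unfolding smooth_step'_def smooth_step''_def
  by (rule DERIV_piecewise3) (auto intro!: derivative_eq_intros simp: algebra_simps)

lemma continuous_on_smooth_step:
  "continuous_on S smooth_step" "continuous_on S smooth_step'" "continuous_on S smooth_step''"
  "continuous_on S smooth_ramp"
proof -
  show "continuous_on S smooth_step''"
    unfolding smooth_step''_def by (intro continuous_on_piecewise3 continuous_intros) auto
  show "continuous_on S smooth_step" "continuous_on S smooth_step'" "continuous_on S smooth_ramp"
    using DERIV_isCont[OF DERIV_smooth_step] DERIV_isCont[OF DERIV_smooth_step']
      DERIV_isCont[OF DERIV_smooth_ramp]
    by (auto intro!: continuous_at_imp_continuous_on)
qed

lemma continuous_on_smooth_step_compose[continuous_intros]: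
  "continuous_on S f \<Longrightarrow> continuous_on S (\<lambda>y. smooth_step (f y))"
  "continuous_on S f \<Longrightarrow> continuous_on S (\<lambda>y. smooth_step' (f y))"
  "continuous_on S f \<Longrightarrow> continuous_on S (\<lambda>y. smooth_step'' (f y))"
  "continuous_on S f \<Longrightarrow> continuous_on S (\<lambda>y. smooth_ramp (f y))"
  by (auto intro: continuous_on_compose2[OF continuous_on_smooth_step(1)]
      continuous_on_compose2[OF continuous_on_smooth_step(2)]
      continuous_on_compose2[OF continuous_on_smooth_step(3)]
      continuous_on_compose2[OF continuous_on_smooth_step(4)])

lemma smooth_step_outside_unit:
  "v \<le> 0 \<Longrightarrow> smooth_step v = 0" "v \<ge> 1 \<Longrightarrow> smooth_step v = 1"
  "v \<le> 0 \<Longrightarrow> smooth_step' v = 0" "v \<ge> 1 \<Longrightarrow> smooth_step' v = 0"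
  "v \<le> 0 \<Longrightarrow> smooth_ramp v = 0" "v \<ge> 1 \<Longrightarrow> smooth_ramp v = v - 1/2"
  by (auto simp: smooth_step_def smooth_step'_def smooth_ramp_def piecewise3_def)

lemma smooth_step_bounds:
  "0 \<le> smooth_step y" "smooth_step y \<le> 1" "0 \<le> smooth_step' y" "0 \<le> smooth_ramp y"
proof -
  have step_eq: "10*y^3 - 15*y^4 + 6*y^5 = y^3 * (6 * (y - 5/4)^2 + 5/8)"
    and one_minus_step_eq: "1 - (10*y^3 - 15*y^4 + 6*y^5) = (1-y)^3 * (1 + 3*y + 6*y^2)"
    and step'_eq: "30*y^2 - 60*y^3 + 30*y^4 = 30 * (y*(1-y))^2"
    and ramp_eq: "(5/2)*y^4 - 3*y^5 + y^6 = y^4 * ((y - 3/2)^2 + 1/4)"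
    by (simp_all add: algebra_simps power2_eq_square power3_eq_cube power_numeral_reduce)
  have "0 \<le> 10*y^3 - 15*y^4 + 6*y^5" if "0 \<le> y"
    unfolding step_eq using that by simp
  moreover have "10*y^3 - 15*y^4 + 6*y^5 \<le> 1" if "0 \<le> y" "y \<le> 1"
  proof -
    have "0 \<le> (1-y)^3 * (1 + 3*y + 6*y^2)"
      using that by simp
    then show ?thesis
      using one_minus_step_eq by linarith
  qed
  moreover have "0 \<le> 30*y^2 - 60*y^3 + 30*y^4" "0 \<le> (5/2)*y^4 - 3*y^5 + y^6"
    unfolding step'_eq ramp_eq by simp_all
  ultimately show "0 \<le> smooth_step y" "smooth_step y \<le> 1" "0 \<le> smooth_step' y" "0 \<le> smooth_ramp y"
    unfolding smooth_step_def smooth_step'_def smooth_ramp_def piecewise3_def by auto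
qed

definition cutoff :: "real \<Rightarrow> real \<Rightarrow> real" where
  "cutoff \<delta> s = smooth_step ((s - \<delta>) / \<delta>)"

definition cutoff' :: "real \<Rightarrow> real \<Rightarrow> real" where
  "cutoff' \<delta> s = smooth_step' ((s - \<delta>) / \<delta>) / \<delta>"

definition cutoff_primitive :: "real \<Rightarrow> real \<Rightarrow> real" where
  "cutoff_primitive \<delta> s = \<delta> * smooth_ramp ((s - \<delta>) / \<delta>)"

lemma DERIV_cutoff: "\<delta> \<noteq> 0 \<Longrightarrow> DERIV (cutoff \<delta>) s :> cutoff' \<delta> s"
  unfolding cutoff_def[abs_def] cutoff'_def
  by (rule DERIV_chain2[OF DERIV_smooth_step, THEN DERIV_cong]) (auto intro!: derivative_eq_intros)

lemma DERIV_cutoff_primitive: "\<delta> \<noteq> 0 \<Longrightarrow> DERIV (cutoff_primitive \<delta>) s :> cutoff \<delta> s"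
  unfolding cutoff_primitive_def[abs_def] cutoff_def
  by (rule DERIV_cmult[OF DERIV_chain2[OF DERIV_smooth_ramp], THEN DERIV_cong])
    (auto intro!: derivative_eq_intros)

lemma cutoff_properties:
  assumes "\<delta> > 0"
  shows "s \<le> \<delta> \<Longrightarrow> cutoff \<delta> s = 0" "s \<le> \<delta> \<Longrightarrow> cutoff' \<delta> s = 0"
    "0 \<le> cutoff \<delta> s" "cutoff \<delta> s \<le> 1" "0 \<le> cutoff' \<delta> s"
    "0 \<le> cutoff_primitive \<delta> s" "cutoff_primitive \<delta> 0 = 0"
    "s \<ge> 2 * \<delta> \<Longrightarrow> cutoff_primitive \<delta> s = s - 3 * \<delta> / 2"
  using assms smooth_step_bounds[of "(s - \<delta>) / \<delta>"]
  by (auto simp: cutoff_def cutoff'_def cutoff_primitive_def smooth_step_outside_unit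
      divide_le_0_iff field_simps divide_right_mono)

lemma continuous_on_cutoff_compose[continuous_intros]:
  "continuous_on S f \<Longrightarrow> continuous_on S (\<lambda>y. cutoff \<delta> (f y))"
  "continuous_on S f \<Longrightarrow> continuous_on S (\<lambda>y. cutoff' \<delta> (f y))"
  "continuous_on S f \<Longrightarrow> continuous_on S (\<lambda>y. cutoff_primitive \<delta> (f y))"
  unfolding cutoff_def cutoff'_def cutoff_primitive_def divide_inverse
  by (intro continuous_intros; assumption)+

section \<open>Lebesgue integrals\<close>

lemma integrable_indicator_bounded_continuous:
  fixes f :: "'a::euclidean_space \<Rightarrow> real"
  assumes "open S" "bounded S" "continuous_on S f" "\<And>x. x \<in> S \<Longrightarrow> \<bar>f x\<bar> \<le> B"
  shows "integrable lborel (\<lambda>x. indicator S x * f x)"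
proof (rule Bochner_Integration.integrable_bound)
  show "integrable lborel (\<lambda>x. indicator (closure S) x *\<^sub>R B)"
    using assms by (intro borel_integrable_compact) (auto simp: compact_closure)
  have "(\<lambda>x. indicator S x *\<^sub>R f x) \<in> borel_measurable borel"
    using assms by (intro borel_measurable_continuous_on_indicator) auto
  then show "(\<lambda>x. indicator S x * f x) \<in> borel_measurable lborel"
    by simp
  show "AE x in lborel. norm (indicator S x * f x) \<le> norm (indicator (closure S) x *\<^sub>R B)"
    using assms(4) closure_subset[of S] by (intro AE_I2) (force simp: indicator_def)
qed

lemma integral_open_interval_FTC:
  fixes f F :: "real \<Rightarrow> real"
  assumes "0 < T" "continuous_on {0..T} F" "\<And>t. t \<in> {0<..<T} \<Longrightarrow> DERIV F t :> f t"
    and "continuous_on {0<..<T} f" "\<And>t. t \<in> {0<..<T} \<Longrightarrow> \<bar>f t\<bar> \<le> B"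
  shows "integral\<^sup>L lborel (\<lambda>t. indicator {0<..<T} t * f t) = F T - F 0"
proof -
  have "(f has_integral (F T - F 0)) {0..T}"
    using assms by (intro fundamental_theorem_of_calculus_interior)
      (auto simp: has_real_derivative_iff_has_vector_derivative[symmetric])
  then have "(f has_integral (F T - F 0)) {0<..<T}"
    using has_integral_open_interval[of f "F T - F 0" 0 T] by simp
  moreover have "(\<lambda>t. indicator {0<..<T} t * f t) = (\<lambda>t. if t \<in> {0<..<T} then f t else 0)"
    by (auto simp: indicator_def)
  ultimately have "((\<lambda>t. indicator {0<..<T} t * f t) has_integral (F T - F 0)) UNIV"
    by (metis has_integral_restrict_UNIV)
  moreover have "integrable lborel (\<lambda>t. indicator {0<..<T} t * f t)"
    using assms by (intro integrable_indicator_bounded_continuous) auto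
  ultimately show ?thesis
    using has_integral_integral_real has_integral_unique by blast
qed

lemma integral_lborel_translate:
  fixes G :: "'a::euclidean_space \<Rightarrow> real"
  assumes "G \<in> borel_measurable borel"
  shows "integral\<^sup>L lborel (\<lambda>x. G (x + c)) = integral\<^sup>L lborel G"
proof -
  have "integral\<^sup>L lborel G = integral\<^sup>L (distr lborel borel ((+) c)) G"
    by (simp add: lborel_distr_plus)
  also have "\<dots> = integral\<^sup>L lborel (\<lambda>x. G (c + x))"
    using assms by (intro integral_distr) auto
  finally show ?thesis
    by (simp add: add.commute)
qed

lemma integrable_lborel_translate:
  fixes G :: "'a::euclidean_space \<Rightarrow> real"
  assumes "integrable lborel G"
  shows "integrable lborel (\<lambda>x. G (x + c))"
proof -
  have "integrable (distr lborel borel ((+) c)) G"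
    using assms by (simp add: lborel_distr_plus)
  then have "integrable lborel (\<lambda>x. G (c + x))"
    using assms by (subst (asm) integrable_distr_eq) auto
  then show ?thesis
    by (simp add: add.commute)
qed

lemma DERIV_along_line_shift:
  fixes G :: "'a::real_normed_vector \<Rightarrow> real"
  assumes "\<And>x. DERIV (\<lambda>h. G (x + h *\<^sub>R e)) 0 :> g x"
  shows "DERIV (\<lambda>h. G (x + h *\<^sub>R e)) s :> g (x + s *\<^sub>R e)"
proof -
  have "DERIV (\<lambda>h. G ((x + s *\<^sub>R e) + h *\<^sub>R e)) 0 :> g (x + s *\<^sub>R e)"
    by (rule assms)
  then have "DERIV (\<lambda>h. G (x + (h + s) *\<^sub>R e)) 0 :> g (x + s *\<^sub>R e)"
    by (simp add: algebra_simps scaleR_add_left)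
  then show ?thesis
    using DERIV_shift[of "\<lambda>h. G (x + h *\<^sub>R e)" "g (x + s *\<^sub>R e)" 0 s] by simp
qed

lemma increment_along_line_bound:
  fixes G :: "'a::real_normed_vector \<Rightarrow> real"
  assumes "\<And>x. DERIV (\<lambda>h. G (x + h *\<^sub>R e)) 0 :> g x" "\<And>y. \<bar>g y\<bar> \<le> M" "h > 0"
  shows "\<bar>G (x + h *\<^sub>R e) - G x\<bar> \<le> M * h"
proof -
  obtain z where "G (x + h *\<^sub>R e) - G (x + 0 *\<^sub>R e) = (h - 0) * g (x + z *\<^sub>R e)"
    using MVT2[of 0 h "\<lambda>h. G (x + h *\<^sub>R e)" "\<lambda>s. g (x + s *\<^sub>R e)"]
      DERIV_along_line_shift[OF assms(1)] assms(3) by auto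
  then have "\<bar>G (x + h *\<^sub>R e) - G x\<bar> = h * \<bar>g (x + z *\<^sub>R e)\<bar>"
    using assms(3) by (simp add: abs_mult)
  also have "\<dots> \<le> h * M"
    using assms(2,3) by (simp add: mult_left_mono)
  finally show ?thesis
    by (simp add: mult.commute)
qed

lemma integral_difference_quotient_eq_0:
  fixes G :: "'a::euclidean_space \<Rightarrow> real"
  assumes "integrable lborel G"
  shows "integral\<^sup>L lborel (\<lambda>x. (G (x + h *\<^sub>R e) - G x) / h) = 0"
proof -
  have "G \<in> borel_measurable borel"
    using borel_measurable_integrable[OF assms] by simp
  then show ?thesis
    using integrable_lborel_translate[OF assms] assms by (simp add: integral_lborel_translate)
qed

lemma integrable_compact_support:
  fixes G :: "'a::euclidean_space \<Rightarrow> real"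
  assumes "compact C" "continuous_on UNIV G" "\<And>x. x \<notin> C \<Longrightarrow> G x = 0"
  shows "integrable lborel G"
proof -
  have "integrable lborel (\<lambda>x. indicator C x *\<^sub>R G x)"
    using assms by (intro borel_integrable_compact) (auto intro: continuous_on_subset)
  moreover have "(\<lambda>x. indicator C x *\<^sub>R G x) = G"
    using assms(3) by (auto simp: indicator_def fun_eq_iff)
  ultimately show ?thesis
    by simp
qed

lemma increment_along_line_eq_0:
  fixes G :: "'a::real_vector \<Rightarrow> real"
  assumes "\<And>x. x \<notin> C \<Longrightarrow> G x = 0" "x \<notin> (\<lambda>(c, s). c - s *\<^sub>R e) ` (C \<times> {0..1::real})"
    and "0 \<le> h" "h \<le> 1"
  shows "G (x + h *\<^sub>R e) - G x = 0"
proof -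
  have "x \<notin> C"
    using assms(2) by (force intro: image_eqI[where x="(x, 0)"])
  moreover have "x + h *\<^sub>R e \<notin> C"
  proof
    assume "x + h *\<^sub>R e \<in> C"
    then have "x \<in> (\<lambda>(c, s). c - s *\<^sub>R e) ` (C \<times> {0..1})"
      using assms(3,4) by (force intro!: image_eqI[where x="(x + h *\<^sub>R e, h)"])
    then show False
      using assms(2) by simp
  qed
  ultimately show ?thesis
    using assms(1) by simp
qed

lemma abs_difference_quotient_le:
  fixes G g :: "'a::real_normed_vector \<Rightarrow> real"
  assumes G0: "\<And>x. x \<notin> C \<Longrightarrow> G x = 0" and D: "\<And>x. DERIV (\<lambda>h. G (x + h *\<^sub>R e)) 0 :> g x"
    and gM: "\<And>y. \<bar>g y\<bar> \<le> M" and h: "0 < h" "h \<le> 1"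
  shows "\<bar>(G (x + h *\<^sub>R e) - G x) / h\<bar> \<le> indicator ((\<lambda>(c, s). c - s *\<^sub>R e) ` (C \<times> {0..1})) x * M"
proof (cases "x \<in> (\<lambda>(c, s). c - s *\<^sub>R e) ` (C \<times> {0..1})")
  case True
  have "\<bar>G (x + h *\<^sub>R e) - G x\<bar> \<le> M * h"
    using D gM h(1) by (rule increment_along_line_bound)
  then show ?thesis
    using True h by (simp add: abs_divide divide_le_eq)
next
  case False
  then have "G (x + h *\<^sub>R e) - G x = 0"
    using h by (intro increment_along_line_eq_0[where C=C] G0) auto
  then show ?thesis
    using False by simp
qed

text \<open>Translation invariance of Lebesgue measure makes every difference quotient of \<open>G\<close> integrate
  to zero; dominated convergence passes this to the limit \<open>g\<close>.\<close>
lemma integral_directional_derivative_eq_0: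
  fixes G g :: "'a::euclidean_space \<Rightarrow> real"
  assumes C: "compact C" and G0: "\<And>x. x \<notin> C \<Longrightarrow> G x = 0" and g0: "\<And>x. x \<notin> C \<Longrightarrow> g x = 0"
    and D: "\<And>x. DERIV (\<lambda>h. G (x + h *\<^sub>R e)) 0 :> g x"
    and gc: "continuous_on UNIV g" and Gc: "continuous_on UNIV G"
  shows "integral\<^sup>L lborel g = 0"
proof -
  obtain M where M: "M \<ge> 0" "\<And>x. x \<in> C \<Longrightarrow> norm (g x) \<le> M"
    using continuous_on_compact_bound[OF C continuous_on_subset[OF gc]] by blast
  have gM: "\<bar>g x\<bar> \<le> M" for x
    using M g0[of x] by (cases "x \<in> C") auto
  define C' where "C' = (\<lambda>(c, s). c - s *\<^sub>R e) ` (C \<times> {0..1::real})"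
  have "compact C'"
    unfolding C'_def using C
    by (intro compact_continuous_image compact_Times compact_Icc)
      (auto intro!: continuous_intros simp: case_prod_beta)
  define hs where "hs n = inverse (real (Suc n))" for n
  have hs: "0 < hs n" "hs n \<le> 1" for n
    by (auto simp: hs_def field_simps)
  define F where "F n x = (G (x + hs n *\<^sub>R e) - G x) / hs n" for n x
  have F0: "integral\<^sup>L lborel (F n) = 0" for n
    unfolding F_def using C Gc G0
    by (intro integral_difference_quotient_eq_0 integrable_compact_support)
  have Gm: "G \<in> borel_measurable borel" and gm: "g \<in> borel_measurable borel"
    using Gc gc by (auto intro: borel_measurable_continuous_onI)
  have "(\<lambda>n. integral\<^sup>L lborel (F n)) \<longlonglongrightarrow> integral\<^sup>L lborel g"
  proof (rule integral_dominated_convergence[where w="\<lambda>x. indicator C' x *\<^sub>R M"])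
    show "integrable lborel (\<lambda>x. indicator C' x *\<^sub>R M)"
      using \<open>compact C'\<close> by (intro borel_integrable_compact) auto
    show "AE x in lborel. norm (F n x) \<le> indicator C' x *\<^sub>R M" for n
      using abs_difference_quotient_le[OF G0 D gM hs[of n]] by (intro AE_I2) (simp add: F_def C'_def)
    have "hs \<longlonglongrightarrow> 0"
      unfolding hs_def by (rule LIMSEQ_inverse_real_of_nat)
    then have hs_at_0: "filterlim hs (at 0) sequentially"
      unfolding filterlim_at using hs by (auto simp: less_imp_neq[symmetric])
    show "AE x in lborel. (\<lambda>n. F n x) \<longlonglongrightarrow> g x"
    proof (intro AE_I2)
      fix x
      have "((\<lambda>h. (G (x + h *\<^sub>R e) - G x) / h) \<longlongrightarrow> g x) (at 0)"
        using D[of x] unfolding DERIV_def by simp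
      from filterlim_compose[OF this hs_at_0] show "(\<lambda>n. F n x) \<longlonglongrightarrow> g x"
        by (simp add: F_def)
    qed
    show "F n \<in> borel_measurable lborel" for n
      unfolding F_def using Gm by measurable
  qed (use gm in simp)
  then have "(\<lambda>n. 0::real) \<longlonglongrightarrow> integral\<^sup>L lborel g"
    using F0 by simp
  from LIMSEQ_unique[OF tendsto_const this] show ?thesis
    by simp
qed

lemma nn_integral_indicator_times:
  fixes S :: "'a::euclidean_space set" and g :: "real \<Rightarrow> real"
  assumes S: "S \<in> sets borel" and g: "g \<in> borel_measurable borel"
  shows "(\<integral>\<^sup>+ p. ennreal (indicator S (fst p) * g (snd p)) \<partial>lborel)
    = emeasure lborel S * (\<integral>\<^sup>+ t. ennreal (g t) \<partial>lborel)"
proof -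
  have m: "(\<lambda>p. ennreal (indicator S (fst p) * g (snd p))) \<in> borel_measurable (lborel \<Otimes>\<^sub>M lborel)"
    using S g by measurable
  have "(\<integral>\<^sup>+ p. ennreal (indicator S (fst p) * g (snd p)) \<partial>lborel)
      = (\<integral>\<^sup>+ x. \<integral>\<^sup>+ t. ennreal (indicator S x * g t) \<partial>lborel \<partial>lborel)"
    using lborel.nn_integral_fst[OF m] by (simp add: lborel_prod)
  also have "\<dots> = (\<integral>\<^sup>+ x. (\<integral>\<^sup>+ t. ennreal (g t) \<partial>lborel) * indicator S x \<partial>lborel)"
    by (intro nn_integral_cong) (simp add: indicator_def)
  also have "\<dots> = emeasure lborel S * (\<integral>\<^sup>+ t. ennreal (g t) \<partial>lborel)"
    using S by (subst nn_integral_cmult_indicator) (auto simp: mult.commute)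
  finally show ?thesis .
qed

section \<open>Continuous extension to the closed cylinder\<close>

lemma ext_cont_continuous_on:
  assumes "ext_cont Om T f"
  shows "continuous_on (Om \<times> {0<..<T}) (\<lambda>(x, t). f x t)"
proof -
  obtain g where "continuous_on (closure Om \<times> {0..T}) g"
    and "\<And>x t. x \<in> Om \<Longrightarrow> t \<in> {0<..<T} \<Longrightarrow> g (x, t) = f x t"
    using assms unfolding ext_cont_def by blast
  moreover have "Om \<times> {0<..<T} \<subseteq> closure Om \<times> {0..T}"
    using closure_subset by auto
  ultimately show ?thesis
    by (auto intro: continuous_on_eq[OF continuous_on_subset])
qed

lemma ext_cont_bounded:
  assumes "bounded Om" "ext_cont Om T f"
  obtains B where "\<And>x t. x \<in> Om \<Longrightarrow> t \<in> {0<..<T} \<Longrightarrow> \<bar>f x t\<bar> \<le> B"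
proof -
  obtain g where g: "continuous_on (closure Om \<times> {0..T}) g"
    and gf: "\<And>x t. x \<in> Om \<Longrightarrow> t \<in> {0<..<T} \<Longrightarrow> g (x, t) = f x t"
    using assms(2) unfolding ext_cont_def by blast
  have "compact (closure Om \<times> {0..T})"
    using assms(1) by (simp add: compact_Times compact_closure)
  then obtain B where B: "\<And>p. p \<in> closure Om \<times> {0..T} \<Longrightarrow> norm (g p) \<le> B"
    using continuous_on_compact_bound[OF _ g] by blast
  show ?thesis
  proof (rule that)
    fix x t assume "x \<in> Om" "t \<in> {0<..<T}"
    then show "\<bar>f x t\<bar> \<le> B"
      using B[of "(x, t)"] gf closure_subset by auto
  qed
qed

lemma ext_cont_continuous_on_slice:
  assumes "ext_cont Om T f" "t \<in> {0<..<T}"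
  shows "continuous_on Om (\<lambda>x. f x t)"
  by (rule continuous_on_compose_Pair[OF ext_cont_continuous_on[OF assms(1)], of Om "\<lambda>x. x" "\<lambda>x. t"])
    (use assms(2) in \<open>auto intro: continuous_intros\<close>)

lemma ext_cont_continuous_on_time_slice:
  assumes "ext_cont Om T f" "x \<in> Om"
  shows "continuous_on {0<..<T} (\<lambda>t. f x t)"
  by (rule continuous_on_compose_Pair[OF ext_cont_continuous_on[OF assms(1)], of _ "\<lambda>t. x" "\<lambda>t. t"])
    (use assms(2) in \<open>auto intro: continuous_intros\<close>)

lemma ext_cont_of_continuous_on:
  assumes "continuous_on (closure Om \<times> {0..T}) (\<lambda>(x, t). f x t)"
  shows "ext_cont Om T f"
  using assms unfolding ext_cont_def by auto

lemma ext_cont_compose: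
  assumes "continuous_on UNIV h" "ext_cont Om T f"
  shows "ext_cont Om T (\<lambda>x t. h (f x t))"
proof -
  obtain g where "continuous_on (closure Om \<times> {0..T}) g" "\<forall>x\<in>Om. \<forall>t\<in>{0<..<T}. g (x, t) = f x t"
    using assms(2) unfolding ext_cont_def by blast
  then show ?thesis
    unfolding ext_cont_def
    by (intro exI[of _ "\<lambda>p. h (g p)"] conjI continuous_on_compose2[OF assms(1)]) auto
qed

lemma ext_cont_add:
  assumes "ext_cont Om T f" "ext_cont Om T g"
  shows "ext_cont Om T (\<lambda>x t. f x t + g x t)"
proof -
  obtain f' g' where "continuous_on (closure Om \<times> {0..T}) f'" "continuous_on (closure Om \<times> {0..T}) g'"
    "\<forall>x\<in>Om. \<forall>t\<in>{0<..<T}. f' (x, t) = f x t" "\<forall>x\<in>Om. \<forall>t\<in>{0<..<T}. g' (x, t) = g x t"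
    using assms unfolding ext_cont_def by blast
  then show ?thesis
    unfolding ext_cont_def by (intro exI[of _ "\<lambda>p. f' p + g' p"] conjI continuous_intros) auto
qed

lemma ext_cont_mult:
  assumes "ext_cont Om T f" "ext_cont Om T g"
  shows "ext_cont Om T (\<lambda>x t. f x t * g x t)"
proof -
  obtain f' g' where "continuous_on (closure Om \<times> {0..T}) f'" "continuous_on (closure Om \<times> {0..T}) g'"
    "\<forall>x\<in>Om. \<forall>t\<in>{0<..<T}. f' (x, t) = f x t" "\<forall>x\<in>Om. \<forall>t\<in>{0<..<T}. g' (x, t) = g x t"
    using assms unfolding ext_cont_def by blast
  then show ?thesis
    unfolding ext_cont_def by (intro exI[of _ "\<lambda>p. f' p * g' p"] conjI continuous_intros) auto
qed

lemma ext_cont_sum: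
  assumes "finite I" "\<And>i. i \<in> I \<Longrightarrow> ext_cont Om T (f i)"
  shows "ext_cont Om T (\<lambda>x t. \<Sum>i\<in>I. f i x t)"
  using assms
proof (induction I rule: finite_induct)
  case empty
  then show ?case
    by (auto intro: ext_cont_of_continuous_on)
next
  case (insert i I)
  then show ?case
    by (simp add: ext_cont_add)
qed

lemma integrable_ext_cont:
  assumes "open Om" "bounded Om" "ext_cont Om T f"
  shows "integrable lborel (\<lambda>p. indicator (Om \<times> {0<..<T}) p * f (fst p) (snd p))"
proof -
  obtain B where "\<And>x t. x \<in> Om \<Longrightarrow> t \<in> {0<..<T} \<Longrightarrow> \<bar>f x t\<bar> \<le> B"
    using ext_cont_bounded[OF assms(2,3)] by blast
  then show ?thesis
    using assms ext_cont_continuous_on[OF assms(3)]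
    by (intro integrable_indicator_bounded_continuous[where B=B])
      (auto intro: open_Times bounded_Times simp: case_prod_beta)
qed

lemma integrable_ext_cont_slice:
  assumes "open Om" "bounded Om" "ext_cont Om T f" "t \<in> {0<..<T}"
  shows "integrable lborel (\<lambda>x. indicator Om x * f x t)"
proof -
  obtain B where "\<And>x t. x \<in> Om \<Longrightarrow> t \<in> {0<..<T} \<Longrightarrow> \<bar>f x t\<bar> \<le> B"
    using ext_cont_bounded[OF assms(2,3)] by blast
  then show ?thesis
    using assms ext_cont_continuous_on_slice[OF assms(3,4)]
    by (intro integrable_indicator_bounded_continuous[where B=B]) auto
qed

lemma C21_l0_imp_C21: "C21_l0 Om T u \<Longrightarrow> C21 Om T u"
  unfolding C21_l0_def by blast

lemma C21_continuous_on:
  assumes "C21 Om T u"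
  shows "continuous_on (closure Om \<times> {0..T}) (\<lambda>(x, t). u x t)"
  using assms unfolding C21_def by blast

lemma C21_ext_cont:
  assumes "C21 Om T u"
  shows "ext_cont Om T u" "ext_cont Om T (dt u)" "i \<in> Basis \<Longrightarrow> ext_cont Om T (dx i u)"
    "i \<in> Basis \<Longrightarrow> j \<in> Basis \<Longrightarrow> ext_cont Om T (dx j (dx i u))"
  using assms ext_cont_of_continuous_on[OF C21_continuous_on[OF assms]] unfolding C21_def by blast+

lemma C21_ext_cont_laplacian:
  assumes "C21 Om T u"
  shows "ext_cont Om T (laplacian u)"
  unfolding laplacian_def[abs_def] using C21_ext_cont(4)[OF assms]
  by (intro ext_cont_sum) auto

lemma C21_continuous_on_slice:
  assumes "C21 Om T u"
  shows "t \<in> {0..T} \<Longrightarrow> continuous_on (closure Om) (\<lambda>x. u x t)"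
    and "x \<in> closure Om \<Longrightarrow> continuous_on {0..T} (\<lambda>t. u x t)"
proof -
  show "continuous_on (closure Om) (\<lambda>x. u x t)" if "t \<in> {0..T}"
    by (rule continuous_on_compose_Pair[OF C21_continuous_on[OF assms], of _ "\<lambda>x. x" "\<lambda>x. t"])
      (use that in \<open>auto intro: continuous_intros\<close>)
  show "continuous_on {0..T} (\<lambda>t. u x t)" if "x \<in> closure Om"
    by (rule continuous_on_compose_Pair[OF C21_continuous_on[OF assms], of _ "\<lambda>t. x" "\<lambda>t. t"])
      (use that in \<open>auto intro: continuous_intros\<close>)
qed

lemma C21_has_derivatives:
  assumes "C21 Om T u" "x \<in> Om" "t \<in> {0<..<T}"
  shows "DERIV (\<lambda>s. u x s) t :> dt u x t"
    and "i \<in> Basis \<Longrightarrow> DERIV (\<lambda>h. u (x + h *\<^sub>R i) t) 0 :> dx i u x t"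
    and "i \<in> Basis \<Longrightarrow> j \<in> Basis \<Longrightarrow> DERIV (\<lambda>h. dx i u (x + h *\<^sub>R j) t) 0 :> dx j (dx i u) x t"
proof -
  have E: "(\<exists>D. ((\<lambda>s. u x s) has_real_derivative D) (at t)) \<and>
      (\<forall>i\<in>Basis. \<exists>D. ((\<lambda>h. u (x + h *\<^sub>R i) t) has_real_derivative D) (at 0)) \<and>
      (\<forall>i\<in>Basis. \<forall>j\<in>Basis. \<exists>D. ((\<lambda>h. dx i u (x + h *\<^sub>R j) t) has_real_derivative D) (at 0))"
    using assms unfolding C21_def by blast
  show "DERIV (\<lambda>s. u x s) t :> dt u x t"
    using E DERIV_imp_deriv unfolding dt_def by metis
  show "DERIV (\<lambda>h. u (x + h *\<^sub>R i) t) 0 :> dx i u x t" if "i \<in> Basis"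
    using E DERIV_imp_deriv that unfolding dx_def by metis
  show "DERIV (\<lambda>h. dx i u (x + h *\<^sub>R j) t) 0 :> dx j (dx i u) x t" if "i \<in> Basis" "j \<in> Basis"
    using E DERIV_imp_deriv that unfolding dx_def[of j] by metis
qed

lemma integrable_heat_residual:
  assumes "open Om" "bounded Om" "C21 Om T u"
  shows "integrable lborel
    (\<lambda>p. indicator (Om \<times> {0<..<T}) p * \<bar>dt u (fst p) (snd p) + laplacian u (fst p) (snd p)\<bar>)"
  using assms C21_ext_cont(2)[OF assms(3)] C21_ext_cont_laplacian[OF assms(3)]
  by (intro integrable_ext_cont ext_cont_compose[where h=abs] ext_cont_add continuous_intros)

section \<open>The lower bound\<close>

lemma eventually_nhds_along_line:
  fixes x e :: "'a::real_normed_vector"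
  assumes "\<forall>\<^sub>F y in nhds x. P y"
  shows "\<forall>\<^sub>F h in nhds 0. P (x + h *\<^sub>R e)"
proof -
  have "filterlim (\<lambda>h::real. x + h *\<^sub>R e) (nhds x) (nhds 0)"
    by (auto intro!: tendsto_eq_intros filterlim_ident)
  then show ?thesis
    using assms by (simp add: filterlim_iff)
qed

lemma continuous_on_indicator_mult:
  fixes f :: "'a::t2_space \<Rightarrow> real"
  assumes S: "open S" and f: "continuous_on S f" and "C \<subseteq> S"
    and vanish: "\<And>x. x \<notin> C \<Longrightarrow> \<forall>\<^sub>F y in nhds x. y \<in> S \<longrightarrow> f y = 0"
  shows "continuous_on UNIV (\<lambda>x. indicator S x * f x)"
proof (rule continuous_at_imp_continuous_on, intro ballI)
  fix x
  show "isCont (\<lambda>x. indicator S x * f x) x"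
  proof (cases "x \<in> C")
    case True
    then have "x \<in> S"
      using \<open>C \<subseteq> S\<close> by blast
    have "isCont (\<lambda>x. indicator S x * f x) x \<longleftrightarrow> isCont f x"
      using eventually_nhds_in_open[OF S \<open>x \<in> S\<close>]
      by (intro isCont_cong) (auto elim!: eventually_mono)
    then show ?thesis
      using f S \<open>x \<in> S\<close> continuous_on_eq_continuous_at by blast
  next
    case False
    have "isCont (\<lambda>x. indicator S x * f x) x \<longleftrightarrow> isCont (\<lambda>x. 0::real) x"
      using vanish[OF False] by (intro isCont_cong) (auto simp: indicator_def elim!: eventually_mono)
    then show ?thesis
      by simp
  qed
qed

lemma DERIV_indicator_mult_along_line:
  fixes f f' :: "'a::real_normed_vector \<Rightarrow> real"
  assumes S: "open S" and "C \<subseteq> S"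
    and vanish: "\<And>x. x \<notin> C \<Longrightarrow> \<forall>\<^sub>F y in nhds x. y \<in> S \<longrightarrow> f y = 0 \<and> f' y = 0"
    and D: "\<And>x. x \<in> C \<Longrightarrow> DERIV (\<lambda>h. f (x + h *\<^sub>R e)) 0 :> f' x"
  shows "DERIV (\<lambda>h. indicator S (x + h *\<^sub>R e) * f (x + h *\<^sub>R e)) 0 :> indicator S x * f' x"
proof (cases "x \<in> C")
  case True
  then have "x \<in> S"
    using \<open>C \<subseteq> S\<close> by blast
  have "\<forall>\<^sub>F h in nhds 0. x + h *\<^sub>R e \<in> S"
    by (rule eventually_nhds_along_line[OF eventually_nhds_in_open[OF S \<open>x \<in> S\<close>]])
  then have "DERIV (\<lambda>h. indicator S (x + h *\<^sub>R e) * f (x + h *\<^sub>R e)) 0 :> f' x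
      \<longleftrightarrow> DERIV (\<lambda>h. f (x + h *\<^sub>R e)) 0 :> f' x"
    by (intro DERIV_cong_ev) (auto elim!: eventually_mono)
  then show ?thesis
    using D[OF True] \<open>x \<in> S\<close> by simp
next
  case False
  have zero: "indicator S x * f' x = 0"
    using eventually_nhds_x_imp_x[OF vanish[OF False]] by (auto simp: indicator_def)
  have "\<forall>\<^sub>F h in nhds 0. indicator S (x + h *\<^sub>R e) * f (x + h *\<^sub>R e) = 0"
    using eventually_nhds_along_line[OF vanish[OF False], of e]
    by (auto simp: indicator_def elim!: eventually_mono)
  then have "DERIV (\<lambda>h. indicator S (x + h *\<^sub>R e) * f (x + h *\<^sub>R e)) 0 :> 0
      \<longleftrightarrow> DERIV (\<lambda>h::real. 0::real) 0 :> 0"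
    by (intro DERIV_cong_ev) auto
  then show ?thesis
    unfolding zero by simp
qed

context
  fixes Om :: "'a::euclidean_space set" and T :: real and u :: "'a \<Rightarrow> real \<Rightarrow> real" and \<delta> :: real
  assumes Om: "open Om" "bounded Om" and u: "C21_l0 Om T u" and \<delta>: "\<delta> > 0"
begin

lemmas C21_u = C21_l0_imp_C21[OF u]

lemma ext_cont_cutoff_u:
  "ext_cont Om T (\<lambda>x t. cutoff \<delta> (u x t))" "ext_cont Om T (\<lambda>x t. cutoff' \<delta> (u x t))"
  using ext_cont_compose[OF continuous_on_cutoff_compose(1)[OF continuous_on_id] C21_ext_cont(1)[OF C21_u]]
    ext_cont_compose[OF continuous_on_cutoff_compose(2)[OF continuous_on_id] C21_ext_cont(1)[OF C21_u]]
  by simp_all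

lemma superlevel_set_compact:
  assumes "t \<in> {0..T}"
  shows "compact {x \<in> closure Om. \<delta> \<le> u x t}"
proof -
  have "closed (closure Om \<inter> (\<lambda>x. u x t) -` {\<delta>..})"
    using C21_continuous_on_slice(1)[OF C21_u assms] by (intro continuous_closed_preimage) auto
  moreover have "closure Om \<inter> (\<lambda>x. u x t) -` {\<delta>..} = {x \<in> closure Om. \<delta> \<le> u x t}"
    by auto
  moreover have "bounded {x \<in> closure Om. \<delta> \<le> u x t}"
    using bounded_closure[OF Om(2)] by (rule bounded_subset) auto
  ultimately show ?thesis
    using compact_eq_bounded_closed by metis
qed

lemma superlevel_set_subset:
  assumes "t \<in> {0..T}"
  shows "{x \<in> closure Om. \<delta> \<le> u x t} \<subseteq> Om"
proof
  fix x assume x: "x \<in> {x \<in> closure Om. \<delta> \<le> u x t}"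
  show "x \<in> Om"
  proof (rule ccontr)
    assume "x \<notin> Om"
    then have "x \<in> frontier Om"
      using x Om(1) by (auto simp: frontier_def interior_open)
    then have "u x t = 0"
      using u assms unfolding C21_l0_def by blast
    then show False
      using x \<delta> by simp
  qed
qed

lemma eventually_below_level:
  assumes "t \<in> {0..T}" "x \<notin> {x \<in> closure Om. \<delta> \<le> u x t}"
  shows "\<forall>\<^sub>F y in nhds x. y \<in> Om \<longrightarrow> u y t < \<delta>"
proof -
  have "open (- {x \<in> closure Om. \<delta> \<le> u x t})"
    using superlevel_set_compact[OF assms(1)] by (simp add: compact_imp_closed open_Compl)
  then show ?thesis
    using eventually_nhds_in_open[OF _ assms(2)[folded Compl_iff]] closure_subset
    by (auto elim!: eventually_mono)
qed

lemma DERIV_cutoff_mult_dx_along_line: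
  assumes x: "x \<in> Om" and t: "t \<in> {0<..<T}" and i: "i \<in> Basis"
  shows "DERIV (\<lambda>h. cutoff \<delta> (u (x + h *\<^sub>R i) t) * dx i u (x + h *\<^sub>R i) t) 0
    :> cutoff' \<delta> (u x t) * dx i u x t * dx i u x t + cutoff \<delta> (u x t) * dx i (dx i u) x t"
proof -
  have "DERIV (\<lambda>h. cutoff \<delta> (u (x + h *\<^sub>R i) t)) 0 :> cutoff' \<delta> (u x t) * dx i u x t"
    using DERIV_chain2[OF DERIV_cutoff C21_has_derivatives(2)[OF C21_u x t i]] \<delta> by simp
  from DERIV_mult[OF this C21_has_derivatives(3)[OF C21_u x t i i]] show ?thesis
    by (simp add: algebra_simps)
qed

text \<open>Integration by parts in direction \<open>i\<close>: the boundary term vanishes because \<open>cutoff \<delta> (u x t)\<close>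
  is supported in the compact superlevel set inside \<open>Om\<close>, and the remaining term
  \<open>cutoff' \<delta> u (\<partial>\<^sub>i u)\<^sup>2\<close> is nonnegative.\<close>
lemma integral_cutoff_mult_second_derivative_nonpos:
  assumes i: "i \<in> Basis" and t: "t \<in> {0<..<T}"
  shows "integral\<^sup>L lborel (\<lambda>x. indicator Om x * (cutoff \<delta> (u x t) * dx i (dx i u) x t)) \<le> 0"
proof -
  have t': "t \<in> {0..T}"
    using t by auto
  define C where "C = {x \<in> closure Om. \<delta> \<le> u x t}"
  have C: "compact C" "C \<subseteq> Om"
    using superlevel_set_compact[OF t'] superlevel_set_subset[OF t'] by (simp_all add: C_def)
  define f where "f x = cutoff \<delta> (u x t) * dx i u x t" for x
  define f' where "f' x = cutoff' \<delta> (u x t) * dx i u x t * dx i u x t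
    + cutoff \<delta> (u x t) * dx i (dx i u) x t" for x
  have ext_f: "ext_cont Om T (\<lambda>x t. cutoff \<delta> (u x t) * dx i u x t)"
    and ext_square: "ext_cont Om T (\<lambda>x t. cutoff' \<delta> (u x t) * dx i u x t * dx i u x t)"
    and ext_second: "ext_cont Om T (\<lambda>x t. cutoff \<delta> (u x t) * dx i (dx i u) x t)"
    using ext_cont_cutoff_u C21_ext_cont(3)[OF C21_u i] C21_ext_cont(4)[OF C21_u i i]
    by (auto intro!: ext_cont_mult)
  have vanish: "\<forall>\<^sub>F y in nhds x. y \<in> Om \<longrightarrow> f y = 0 \<and> f' y = 0" if "x \<notin> C" for x
    using eventually_below_level[OF t' that[unfolded C_def]]
    by (auto simp: f_def f'_def cutoff_properties(1,2)[OF \<delta>] elim!: eventually_mono)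
  have vanish_f: "\<forall>\<^sub>F y in nhds x. y \<in> Om \<longrightarrow> f y = 0" if "x \<notin> C" for x
    using vanish[OF that] by (auto elim: eventually_mono)
  have vanish_f': "\<forall>\<^sub>F y in nhds x. y \<in> Om \<longrightarrow> f' y = 0" if "x \<notin> C" for x
    using vanish[OF that] by (auto elim: eventually_mono)
  have cont_f: "continuous_on Om f"
    using ext_cont_continuous_on_slice[OF ext_f t] by (simp add: f_def)
  have cont_f': "continuous_on Om f'"
    using ext_cont_continuous_on_slice[OF ext_cont_add[OF ext_square ext_second] t] by (simp add: f'_def)
  have D: "DERIV (\<lambda>h. f (x + h *\<^sub>R i)) 0 :> f' x" if "x \<in> C" for x
    using DERIV_cutoff_mult_dx_along_line[OF _ t i] that C(2) unfolding f_def f'_def by blast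
  have "integral\<^sup>L lborel (\<lambda>x. indicator Om x * f' x) = 0"
  proof (rule integral_directional_derivative_eq_0[OF C(1), where G="\<lambda>x. indicator Om x * f x"])
    show "indicator Om x * f x = 0" "indicator Om x * f' x = 0" if "x \<notin> C" for x
      using eventually_nhds_x_imp_x[OF vanish[OF that]] by (auto simp: indicator_def)
    show "DERIV (\<lambda>h. indicator Om (x + h *\<^sub>R i) * f (x + h *\<^sub>R i)) 0 :> indicator Om x * f' x" for x
      using Om(1) C(2) vanish D by (rule DERIV_indicator_mult_along_line)
    show "continuous_on UNIV (\<lambda>x. indicator Om x * f x)"
      using Om(1) cont_f C(2) vanish_f by (rule continuous_on_indicator_mult)
    show "continuous_on UNIV (\<lambda>x. indicator Om x * f' x)"
      using Om(1) cont_f' C(2) vanish_f' by (rule continuous_on_indicator_mult)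
  qed
  moreover have "integral\<^sup>L lborel (\<lambda>x. indicator Om x * f' x)
      = integral\<^sup>L lborel (\<lambda>x. indicator Om x * (cutoff' \<delta> (u x t) * dx i u x t * dx i u x t))
        + integral\<^sup>L lborel (\<lambda>x. indicator Om x * (cutoff \<delta> (u x t) * dx i (dx i u) x t))"
    unfolding f'_def distrib_left
    by (intro Bochner_Integration.integral_add integrable_ext_cont_slice[OF Om _ t]
        ext_square ext_second)
  moreover have "0 \<le> integral\<^sup>L lborel (\<lambda>x. indicator Om x * (cutoff' \<delta> (u x t) * dx i u x t * dx i u x t))"
    using cutoff_properties(5)[OF \<delta>] by (intro integral_nonneg_AE AE_I2) (simp add: mult.assoc)
  ultimately show ?thesis
    by linarith
qed

lemma integral_cutoff_mult_laplacian_nonpos: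
  assumes t: "t \<in> {0<..<T}"
  shows "integral\<^sup>L lborel (\<lambda>x. indicator Om x * (cutoff \<delta> (u x t) * laplacian u x t)) \<le> 0"
proof -
  have int: "integrable lborel (\<lambda>x. indicator Om x * (cutoff \<delta> (u x t) * dx i (dx i u) x t))"
    if "i \<in> Basis" for i
    using ext_cont_mult[OF ext_cont_cutoff_u(1) C21_ext_cont(4)[OF C21_u that that]]
    by (rule integrable_ext_cont_slice[OF Om _ t])
  have "integral\<^sup>L lborel (\<lambda>x. indicator Om x * (cutoff \<delta> (u x t) * laplacian u x t))
      = (\<Sum>i\<in>Basis. integral\<^sup>L lborel (\<lambda>x. indicator Om x * (cutoff \<delta> (u x t) * dx i (dx i u) x t)))"
    unfolding laplacian_def sum_distrib_left using int by (intro Bochner_Integration.integral_sum) auto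
  also have "\<dots> \<le> 0"
    using integral_cutoff_mult_second_derivative_nonpos[OF _ t] by (intro sum_nonpos) blast
  finally show ?thesis .
qed

lemma integral_cutoff_mult_dt:
  assumes T: "T > 0" and x: "x \<in> Om"
  shows "integral\<^sup>L lborel (\<lambda>t. indicator {0<..<T} t * (cutoff \<delta> (u x t) * dt u x t))
    = - cutoff_primitive \<delta> (u x 0)"
proof -
  have ext: "ext_cont Om T (\<lambda>x t. cutoff \<delta> (u x t) * dt u x t)"
    using ext_cont_cutoff_u(1) C21_ext_cont(2)[OF C21_u] by (rule ext_cont_mult)
  obtain B where B: "\<And>t. t \<in> {0<..<T} \<Longrightarrow> \<bar>cutoff \<delta> (u x t) * dt u x t\<bar> \<le> B"
    using ext_cont_bounded[OF Om(2) ext] x by metis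
  have "x \<in> closure Om"
    using x closure_subset by blast
  then have "u x T = 0" and u_cont: "continuous_on {0..T} (\<lambda>t. u x t)"
    using u C21_continuous_on_slice(2)[OF C21_u] unfolding C21_l0_def by blast+
  have "integral\<^sup>L lborel (\<lambda>t. indicator {0<..<T} t * (cutoff \<delta> (u x t) * dt u x t))
      = cutoff_primitive \<delta> (u x T) - cutoff_primitive \<delta> (u x 0)"
  proof (rule integral_open_interval_FTC[OF T _ _ _ B])
    show "continuous_on {0..T} (\<lambda>t. cutoff_primitive \<delta> (u x t))"
      using u_cont by (rule continuous_on_cutoff_compose)
    show "DERIV (\<lambda>t. cutoff_primitive \<delta> (u x t)) t :> cutoff \<delta> (u x t) * dt u x t"
      if "t \<in> {0<..<T}" for t
      using DERIV_chain2[OF DERIV_cutoff_primitive C21_has_derivatives(1)[OF C21_u x that]] \<delta> by simp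
    show "continuous_on {0<..<T} (\<lambda>t. cutoff \<delta> (u x t) * dt u x t)"
      using ext x by (rule ext_cont_continuous_on_time_slice)
  qed
  then show ?thesis
    using \<open>u x T = 0\<close> cutoff_properties(7)[OF \<delta>] by simp
qed

lemma integral_cylinder_cutoff_mult_dt:
  assumes T: "T > 0"
  shows "integral\<^sup>L lborel
      (\<lambda>p. indicator (Om \<times> {0<..<T}) p * (cutoff \<delta> (u (fst p) (snd p)) * dt u (fst p) (snd p)))
    = - integral\<^sup>L lborel (\<lambda>x. indicator Om x * cutoff_primitive \<delta> (u x 0))"
proof -
  let ?f = "\<lambda>p. indicator (Om \<times> {0<..<T}) p * (cutoff \<delta> (u (fst p) (snd p)) * dt u (fst p) (snd p))"
  have "integrable lborel ?f"
    using ext_cont_mult[OF ext_cont_cutoff_u(1) C21_ext_cont(2)[OF C21_u]]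
    by (rule integrable_ext_cont[OF Om])
  then have "integral\<^sup>L lborel ?f = (\<integral>x. (\<integral>t. ?f (x, t) \<partial>lborel) \<partial>lborel)"
    using lborel_pair.integral_fst'[of ?f] by (simp add: lborel_prod)
  also have "\<dots> = (\<integral>x. - (indicator Om x * cutoff_primitive \<delta> (u x 0)) \<partial>lborel)"
  proof (intro Bochner_Integration.integral_cong refl)
    fix x :: 'a
    show "(\<integral>t. ?f (x, t) \<partial>lborel) = - (indicator Om x * cutoff_primitive \<delta> (u x 0))"
      using integral_cutoff_mult_dt[OF T, of x]
      by (cases "x \<in> Om") (simp_all add: indicator_def)
  qed
  finally show ?thesis
    by simp
qed

lemma integral_cylinder_cutoff_mult_laplacian_nonpos:
  "integral\<^sup>L lborel
      (\<lambda>p. indicator (Om \<times> {0<..<T}) p * (cutoff \<delta> (u (fst p) (snd p)) * laplacian u (fst p) (snd p)))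
    \<le> 0"
proof -
  define f where "f x t = indicator (Om \<times> {0<..<T}) (x, t) * (cutoff \<delta> (u x t) * laplacian u x t)"
    for x t
  have "integrable lborel (\<lambda>p. f (fst p) (snd p))"
    unfolding f_def prod.collapse
    using ext_cont_mult[OF ext_cont_cutoff_u(1) C21_ext_cont_laplacian[OF C21_u]]
    by (rule integrable_ext_cont[OF Om])
  then have "integral\<^sup>L lborel (\<lambda>p. f (fst p) (snd p)) = (\<integral>t. (\<integral>x. f x t \<partial>lborel) \<partial>lborel)"
    using lborel_pair.integral_snd[of f] by (simp add: lborel_prod case_prod_beta')
  also have "\<dots> \<le> 0"
  proof -
    have "(\<integral>x. f x t \<partial>lborel) \<le> 0" for t
    proof (cases "t \<in> {0<..<T}")
      case True
      then show ?thesis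
        using integral_cutoff_mult_laplacian_nonpos[OF True] by (simp add: f_def indicator_def)
    next
      case False
      then have "f x t = 0" for x
        by (simp add: f_def)
      then show ?thesis
        by simp
    qed
    then have "0 \<le> (\<integral>t. - (\<integral>x. f x t \<partial>lborel) \<partial>lborel)"
      by (intro integral_nonneg_AE AE_I2) simp
    then show ?thesis
      by simp
  qed
  finally show ?thesis
    by (simp add: f_def)
qed

lemma integral_cutoff_primitive_le_heat_residual:
  assumes "T > 0"
  shows "integral\<^sup>L lborel (\<lambda>x. indicator Om x * cutoff_primitive \<delta> (u x 0))
    \<le> integral\<^sup>L lborel
      (\<lambda>p. indicator (Om \<times> {0<..<T}) p * \<bar>dt u (fst p) (snd p) + laplacian u (fst p) (snd p)\<bar>)"
proof -
  let ?Q = "Om \<times> {0<..<T}"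
  let ?A = "\<lambda>p. indicator ?Q p * (cutoff \<delta> (u (fst p) (snd p)) * dt u (fst p) (snd p))"
  let ?B = "\<lambda>p. indicator ?Q p * (cutoff \<delta> (u (fst p) (snd p)) * laplacian u (fst p) (snd p))"
  have int: "integrable lborel ?A" "integrable lborel ?B"
    using ext_cont_mult[OF ext_cont_cutoff_u(1) C21_ext_cont(2)[OF C21_u]]
      ext_cont_mult[OF ext_cont_cutoff_u(1) C21_ext_cont_laplacian[OF C21_u]]
    by (auto intro: integrable_ext_cont[OF Om])
  have "- (?A p + ?B p) \<le> indicator ?Q p * \<bar>dt u (fst p) (snd p) + laplacian u (fst p) (snd p)\<bar>" for p
  proof -
    let ?c = "cutoff \<delta> (u (fst p) (snd p))" and ?r = "dt u (fst p) (snd p) + laplacian u (fst p) (snd p)"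
    have "- (?c * ?r) \<le> ?c * \<bar>?r\<bar>"
      using cutoff_properties(3)[OF \<delta>] by (metis abs_ge_minus_self abs_mult abs_of_nonneg)
    also have "\<dots> \<le> \<bar>?r\<bar>"
      using cutoff_properties(3,4)[OF \<delta>] by (intro mult_left_le_one_le) auto
    finally show ?thesis
      by (simp add: indicator_def algebra_simps)
  qed
  then have "integral\<^sup>L lborel (\<lambda>p. - (?A p + ?B p))
      \<le> integral\<^sup>L lborel (\<lambda>p. indicator ?Q p * \<bar>dt u (fst p) (snd p) + laplacian u (fst p) (snd p)\<bar>)"
    using int integrable_heat_residual[OF Om C21_u] by (intro integral_mono) auto
  moreover have "integral\<^sup>L lborel (\<lambda>p. - (?A p + ?B p)) = - (integral\<^sup>L lborel ?A + integral\<^sup>L lborel ?B)"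
    using int by simp
  ultimately show ?thesis
    using integral_cylinder_cutoff_mult_dt[OF assms] integral_cylinder_cutoff_mult_laplacian_nonpos by linarith
qed

end

lemma le_of_forall_perturbed_le:
  fixes m I c d :: real
  assumes "d > 0" "\<And>\<delta>. 0 < \<delta> \<Longrightarrow> \<delta> \<le> d \<Longrightarrow> (1 - c * \<delta>) * m \<le> I"
  shows "m \<le> I"
proof (rule tendsto_upperbound)
  have "((\<lambda>\<delta>. (1 - c * \<delta>) * m) \<longlongrightarrow> (1 - c * 0) * m) (at_right 0)"
    by (intro tendsto_intros)
  then show "((\<lambda>\<delta>. (1 - c * \<delta>) * m) \<longlongrightarrow> m) (at_right 0)"
    by simp
  show "\<forall>\<^sub>F \<delta> in at_right 0. (1 - c * \<delta>) * m \<le> I"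
    using assms unfolding eventually_at_right_field by (intro exI[of _ d]) auto
qed (simp_all add: trivial_limit_at_right_real)

lemma nn_integral_heat_residual_eq:
  fixes Om :: "'a::euclidean_space set"
  assumes "open Om" "bounded Om" "C21 Om T u"
  shows "(\<integral>\<^sup>+ p. indicator (Om \<times> {0<..<T}) p *
      ennreal \<bar>dt u (fst p) (snd p) + laplacian u (fst p) (snd p)\<bar> \<partial>lborel)
    = ennreal (integral\<^sup>L lborel
      (\<lambda>p. indicator (Om \<times> {0<..<T}) p * \<bar>dt u (fst p) (snd p) + laplacian u (fst p) (snd p)\<bar>))"
proof -
  have "(\<integral>\<^sup>+ p. indicator (Om \<times> {0<..<T}) p *
      ennreal \<bar>dt u (fst p) (snd p) + laplacian u (fst p) (snd p)\<bar> \<partial>lborel)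
    = (\<integral>\<^sup>+ p. ennreal (indicator (Om \<times> {0<..<T}) p *
      \<bar>dt u (fst p) (snd p) + laplacian u (fst p) (snd p)\<bar>) \<partial>lborel)"
    by (intro nn_integral_cong) (simp add: indicator_def)
  also have "\<dots> = ennreal (integral\<^sup>L lborel
      (\<lambda>p. indicator (Om \<times> {0<..<T}) p * \<bar>dt u (fst p) (snd p) + laplacian u (fst p) (snd p)\<bar>))"
    using integrable_heat_residual[OF assms] by (intro nn_integral_eq_integral) auto
  finally show ?thesis .
qed

lemma emeasure_le_heat_residual:
  fixes Om :: "'a::euclidean_space set" and K :: "'a set"
  assumes Om: "open Om" "bounded Om" and T: "T > 0" and K: "compact K" "K \<subseteq> Om"
    and u: "C21_l0 Om T u" and u_ge_1: "\<And>x. x \<in> K \<Longrightarrow> 1 \<le> u x 0"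
  shows "emeasure lborel K \<le> (\<integral>\<^sup>+ p. indicator (Om \<times> {0<..<T}) p *
    ennreal \<bar>dt u (fst p) (snd p) + laplacian u (fst p) (snd p)\<bar> \<partial>lborel)"
proof -
  define I where "I = integral\<^sup>L lborel
    (\<lambda>p. indicator (Om \<times> {0<..<T}) p * \<bar>dt u (fst p) (snd p) + laplacian u (fst p) (snd p)\<bar>)"
  have C21: "C21 Om T u"
    using u by (rule C21_l0_imp_C21)
  have u0: "continuous_on (closure Om) (\<lambda>x. u x 0)"
    using C21_continuous_on_slice(1)[OF C21] T by simp
  have K_finite: "emeasure lborel K < \<infinity>"
    using K(1) by (rule emeasure_compact_finite)
  have scaled: "(1 - 3 / 2 * \<delta>) * measure lborel K \<le> I" if \<delta>: "0 < \<delta>" "\<delta> \<le> 1/2" for \<delta>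
  proof -
    have cont: "continuous_on (closure Om) (\<lambda>x. cutoff_primitive \<delta> (u x 0))"
      using u0 by (rule continuous_on_cutoff_compose)
    then obtain B where "\<And>x. x \<in> closure Om \<Longrightarrow> norm (cutoff_primitive \<delta> (u x 0)) \<le> B"
      using continuous_on_compact_bound compact_closure Om(2) by metis
    then have int: "integrable lborel (\<lambda>x. indicator Om x * cutoff_primitive \<delta> (u x 0))"
      using cont closure_subset Om
      by (intro integrable_indicator_bounded_continuous[where B=B]) (auto intro: continuous_on_subset)
    have "(1 - 3 / 2 * \<delta>) * measure lborel K = integral\<^sup>L lborel (\<lambda>x. (1 - 3 / 2 * \<delta>) * indicator K x)"
      by simp
    also have "\<dots> \<le> integral\<^sup>L lborel (\<lambda>x. indicator Om x * cutoff_primitive \<delta> (u x 0))"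
    proof (rule integral_mono[OF _ int])
      show "integrable lborel (\<lambda>x. (1 - 3 / 2 * \<delta>) * indicator K x)"
        using K K_finite by (intro integrable_mult_right integrable_real_indicator) (auto intro: borel_compact)
      show "(1 - 3 / 2 * \<delta>) * indicator K x \<le> indicator Om x * cutoff_primitive \<delta> (u x 0)" for x
        using K(2) u_ge_1[of x] \<delta> cutoff_properties(6,8)[OF \<delta>(1), of "u x 0"]
        by (cases "x \<in> K") (auto simp: indicator_def)
    qed
    also have "\<dots> \<le> I"
      unfolding I_def using Om u \<delta>(1) T by (rule integral_cutoff_primitive_le_heat_residual)
    finally show ?thesis .
  qed
  have "measure lborel K \<le> I"
    by (rule le_of_forall_perturbed_le[where d="1/2" and c="3/2", OF _ scaled]) auto
  then have "emeasure lborel K \<le> ennreal I"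
    using K_finite by (simp add: emeasure_eq_ennreal_measure ennreal_leI)
  then show ?thesis
    unfolding I_def nn_integral_heat_residual_eq[OF Om C21] .
qed

section \<open>Test functions\<close>

definition bump_arg :: "'a::real_inner \<Rightarrow> real \<Rightarrow> 'a \<Rightarrow> real" where
  "bump_arg c r y = inverse (3 * r^2) * (4 * r^2 - (y - c) \<bullet> (y - c))"

definition bump_arg' :: "'a::real_inner \<Rightarrow> real \<Rightarrow> 'a \<Rightarrow> 'a \<Rightarrow> real" where
  "bump_arg' c r e y = inverse (3 * r^2) * (- 2 * ((y - c) \<bullet> e))"

lemma DERIV_bump_arg: "DERIV (\<lambda>h. bump_arg c r (y + h *\<^sub>R e)) 0 :> bump_arg' c r e y"
  unfolding bump_arg_def bump_arg'_def
  by (auto intro!: derivative_eq_intros simp: inner_commute algebra_simps)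

lemma DERIV_bump_arg':
  "DERIV (\<lambda>h. bump_arg' c r e (y + h *\<^sub>R e')) 0 :> inverse (3 * r^2) * (- 2 * (e' \<bullet> e))"
  unfolding bump_arg'_def
  by (auto intro!: derivative_eq_intros simp: inner_commute algebra_simps)

definition bump :: "'a::real_inner \<Rightarrow> real \<Rightarrow> 'a \<Rightarrow> real" where
  "bump c r y = smooth_step (bump_arg c r y)"

definition bump' :: "'a::real_inner \<Rightarrow> real \<Rightarrow> 'a \<Rightarrow> 'a \<Rightarrow> real" where
  "bump' c r e y = smooth_step' (bump_arg c r y) * bump_arg' c r e y"

definition bump'' :: "'a::real_inner \<Rightarrow> real \<Rightarrow> 'a \<Rightarrow> 'a \<Rightarrow> 'a \<Rightarrow> real" where
  "bump'' c r e e' y = smooth_step'' (bump_arg c r y) * bump_arg' c r e' y * bump_arg' c r e y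
    + smooth_step' (bump_arg c r y) * (inverse (3 * r^2) * (- 2 * (e' \<bullet> e)))"

lemma DERIV_bump: "DERIV (\<lambda>h. bump c r (y + h *\<^sub>R e)) 0 :> bump' c r e y"
  unfolding bump_def bump'_def using DERIV_chain2[OF DERIV_smooth_step DERIV_bump_arg] by simp

lemma DERIV_bump': "DERIV (\<lambda>h. bump' c r e (y + h *\<^sub>R e')) 0 :> bump'' c r e e' y"
  unfolding bump'_def bump''_def
  using DERIV_mult[OF DERIV_chain2[OF DERIV_smooth_step' DERIV_bump_arg] DERIV_bump_arg']
  by (simp add: algebra_simps)

lemma bump_bounds: "0 \<le> bump c r y" "bump c r y \<le> 1"
  unfolding bump_def using smooth_step_bounds by auto

lemma bump_eq_1:
  assumes "r > 0" "dist y c < r"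
  shows "bump c r y = 1"
proof -
  have "(dist y c)^2 \<le> r^2"
    using assms by (intro power_mono) auto
  then have "1 \<le> bump_arg c r y"
    using assms(1) by (simp add: bump_arg_def dist_norm power2_norm_eq_inner field_simps)
  then show ?thesis
    by (simp add: bump_def smooth_step_outside_unit)
qed

lemma bump_eq_0:
  assumes "r > 0" "dist y c \<ge> 2 * r"
  shows "bump c r y = 0"
proof -
  have "(2 * r)^2 \<le> (dist y c)^2"
    using assms by (intro power_mono) auto
  then have "bump_arg c r y \<le> 0"
    using assms(1) by (simp add: bump_arg_def dist_norm power2_norm_eq_inner field_simps)
  then show ?thesis
    by (simp add: bump_def smooth_step_outside_unit)
qed

text \<open>Each pair \<open>(c, r) \<in> F\<close> stands for the ball with centre \<open>c\<close> and radius \<open>r\<close>.\<close>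
definition plateau :: "('a::real_inner \<times> real) set \<Rightarrow> 'a \<Rightarrow> real" where
  "plateau F y = smooth_step (\<Sum>p\<in>F. bump (fst p) (snd p) y)"

definition plateau' :: "('a::real_inner \<times> real) set \<Rightarrow> 'a \<Rightarrow> 'a \<Rightarrow> real" where
  "plateau' F e y = smooth_step' (\<Sum>p\<in>F. bump (fst p) (snd p) y) * (\<Sum>p\<in>F. bump' (fst p) (snd p) e y)"

definition plateau'' :: "('a::real_inner \<times> real) set \<Rightarrow> 'a \<Rightarrow> 'a \<Rightarrow> 'a \<Rightarrow> real" where
  "plateau'' F e e' y =
    smooth_step'' (\<Sum>p\<in>F. bump (fst p) (snd p) y)
      * (\<Sum>p\<in>F. bump' (fst p) (snd p) e' y) * (\<Sum>p\<in>F. bump' (fst p) (snd p) e y)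
    + smooth_step' (\<Sum>p\<in>F. bump (fst p) (snd p) y) * (\<Sum>p\<in>F. bump'' (fst p) (snd p) e e' y)"

lemma DERIV_bump_sum:
  "DERIV (\<lambda>h. \<Sum>p\<in>F. bump (fst p) (snd p) (y + h *\<^sub>R e)) 0 :> (\<Sum>p\<in>F. bump' (fst p) (snd p) e y)"
  "DERIV (\<lambda>h. \<Sum>p\<in>F. bump' (fst p) (snd p) e (y + h *\<^sub>R e')) 0 :> (\<Sum>p\<in>F. bump'' (fst p) (snd p) e e' y)"
  by (intro DERIV_sum DERIV_bump DERIV_bump')+

lemma DERIV_plateau: "DERIV (\<lambda>h. plateau F (y + h *\<^sub>R e)) 0 :> plateau' F e y"
  unfolding plateau_def plateau'_def
  using DERIV_chain2[OF DERIV_smooth_step DERIV_bump_sum(1)] by simp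

lemma DERIV_plateau': "DERIV (\<lambda>h. plateau' F e (y + h *\<^sub>R e')) 0 :> plateau'' F e e' y"
  unfolding plateau'_def plateau''_def
  using DERIV_mult[OF DERIV_chain2[OF DERIV_smooth_step' DERIV_bump_sum(1)] DERIV_bump_sum(2)]
  by (simp add: algebra_simps)

lemma continuous_on_plateau:
  "continuous_on S (plateau F)" "continuous_on S (plateau' F e)" "continuous_on S (plateau'' F e e')"
  unfolding plateau_def[abs_def] plateau'_def[abs_def] plateau''_def[abs_def]
    bump_def bump'_def bump''_def bump_arg_def bump_arg'_def
  by (intro continuous_intros)+

lemma plateau_bounds: "0 \<le> plateau F y" "plateau F y \<le> 1"
  unfolding plateau_def using smooth_step_bounds by auto

lemma plateau_eq_1:
  assumes "finite F" "p \<in> F" "snd p > 0" "dist y (fst p) < snd p"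
  shows "plateau F y = 1"
proof -
  have "1 = bump (fst p) (snd p) y"
    using bump_eq_1[OF assms(3,4)] by simp
  also have "\<dots> \<le> (\<Sum>p\<in>F. bump (fst p) (snd p) y)"
    using assms(1,2) bump_bounds by (intro member_le_sum) auto
  finally show ?thesis
    by (simp add: plateau_def smooth_step_outside_unit)
qed

lemma plateau_eq_0:
  assumes "\<And>p. p \<in> F \<Longrightarrow> snd p > 0 \<and> dist y (fst p) \<ge> 2 * snd p"
  shows "plateau F y = 0"
proof -
  have "(\<Sum>p\<in>F. bump (fst p) (snd p) y) = 0"
    using assms bump_eq_0 by (intro sum.neutral) blast
  then show ?thesis
    by (simp add: plateau_def smooth_step_outside_unit)
qed

lemma plateau_le_indicator:
  assumes "\<And>p. p \<in> F \<Longrightarrow> snd p > 0 \<and> ball (fst p) (2 * snd p) \<subseteq> V"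
  shows "plateau F y \<le> indicator V y"
proof (cases "y \<in> V")
  case True
  then show ?thesis
    using plateau_bounds by simp
next
  case False
  then have "plateau F y = 0"
    using assms by (intro plateau_eq_0) (force simp: dist_commute)
  then show ?thesis
    by simp
qed

definition time_cutoff :: "real \<Rightarrow> real \<Rightarrow> real" where
  "time_cutoff \<tau> t = 1 - smooth_step (t / \<tau>)"

definition time_cutoff' :: "real \<Rightarrow> real \<Rightarrow> real" where
  "time_cutoff' \<tau> t = - (smooth_step' (t / \<tau>) / \<tau>)"

lemma DERIV_time_cutoff: "DERIV (time_cutoff \<tau>) t :> time_cutoff' \<tau> t"
  unfolding time_cutoff_def[abs_def] time_cutoff'_def divide_inverse
  using DERIV_diff[OF DERIV_const DERIV_chain2[OF DERIV_smooth_step DERIV_cmult[OF DERIV_ident, of "inverse \<tau>"]]]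
  by (simp add: mult.commute)

lemma time_cutoff_properties:
  assumes "\<tau> > 0"
  shows "t \<ge> \<tau> \<Longrightarrow> time_cutoff \<tau> t = 0" "time_cutoff \<tau> 0 = 1" "0 \<le> time_cutoff \<tau> t"
    "time_cutoff \<tau> t \<le> 1" "time_cutoff' \<tau> t \<le> 0"
  using assms smooth_step_bounds[of "t / \<tau>"]
  by (auto simp: time_cutoff_def time_cutoff'_def smooth_step_outside_unit field_simps)

lemma continuous_on_time_cutoff: "continuous_on S (time_cutoff \<tau>)" "continuous_on S (time_cutoff' \<tau>)"
  unfolding time_cutoff_def[abs_def] time_cutoff'_def[abs_def] divide_inverse
  by (intro continuous_intros)+

definition test_function :: "('a::euclidean_space \<times> real) set \<Rightarrow> real \<Rightarrow> 'a \<Rightarrow> real \<Rightarrow> real" where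
  "test_function F \<tau> x t = plateau F x * time_cutoff \<tau> t"

lemma dt_test_function: "dt (test_function F \<tau>) x t = plateau F x * time_cutoff' \<tau> t"
  unfolding dt_def test_function_def by (intro DERIV_imp_deriv DERIV_cmult DERIV_time_cutoff)

lemma DERIV_test_function:
  "DERIV (\<lambda>h. test_function F \<tau> (x + h *\<^sub>R i) t) 0 :> plateau' F i x * time_cutoff \<tau> t"
  unfolding test_function_def by (intro DERIV_cmult_right DERIV_plateau)

lemma dx_test_function: "dx i (test_function F \<tau>) = (\<lambda>x t. plateau' F i x * time_cutoff \<tau> t)"
  unfolding dx_def[abs_def] by (intro ext DERIV_imp_deriv DERIV_test_function)

lemma DERIV_dx_test_function:
  "DERIV (\<lambda>h. dx i (test_function F \<tau>) (x + h *\<^sub>R j) t) 0 :> plateau'' F i j x * time_cutoff \<tau> t"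
  unfolding dx_test_function by (intro DERIV_cmult_right DERIV_plateau')

lemma dxx_test_function: "dx j (dx i (test_function F \<tau>)) x t = plateau'' F i j x * time_cutoff \<tau> t"
  unfolding dx_def[of j] by (intro DERIV_imp_deriv DERIV_dx_test_function)

lemma laplacian_test_function:
  "laplacian (test_function F \<tau>) x t = time_cutoff \<tau> t * (\<Sum>i\<in>Basis. plateau'' F i i x)"
  unfolding laplacian_def dxx_test_function by (simp add: sum_distrib_left mult.commute)

lemma continuous_on_product_of_separate:
  fixes a :: "'a::topological_space \<Rightarrow> real" and b :: "'b::topological_space \<Rightarrow> real"
  assumes "continuous_on UNIV a" "continuous_on UNIV b"
  shows "continuous_on S (\<lambda>(x, t). a x * b t)"
proof -
  have "continuous_on UNIV (\<lambda>p. a (fst p) * b (snd p))"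
    using assms by (intro continuous_on_mult continuous_on_compose2[OF assms(1)]
        continuous_on_compose2[OF assms(2)] continuous_intros) auto
  then show ?thesis
    by (rule continuous_on_subset[THEN continuous_on_eq]) (auto simp: case_prod_beta)
qed

lemma C21_test_function: "C21 Om T (test_function F \<tau>)"
  unfolding C21_def
proof (intro conjI ballI)
  show "continuous_on (closure Om \<times> {0..T}) (\<lambda>(x, t). test_function F \<tau> x t)"
    unfolding test_function_def
    by (intro continuous_on_product_of_separate continuous_on_plateau continuous_on_time_cutoff)
  fix x t
  show "\<exists>D. ((\<lambda>s. test_function F \<tau> x s) has_real_derivative D) (at t)"
    unfolding test_function_def by (rule exI, rule DERIV_cmult[OF DERIV_time_cutoff])
  show "\<exists>D. ((\<lambda>h. test_function F \<tau> (x + h *\<^sub>R i) t) has_real_derivative D) (at 0)" for i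
    by (rule exI, rule DERIV_test_function)
  show "\<exists>D. ((\<lambda>h. dx i (test_function F \<tau>) (x + h *\<^sub>R j) t) has_real_derivative D) (at 0)" for i j
    by (rule exI, rule DERIV_dx_test_function)
next
  show "ext_cont Om T (dt (test_function F \<tau>))"
    unfolding dt_test_function[abs_def]
    by (intro ext_cont_of_continuous_on continuous_on_product_of_separate
        continuous_on_plateau continuous_on_time_cutoff)
  show "ext_cont Om T (dx i (test_function F \<tau>))" for i
    unfolding dx_test_function
    by (intro ext_cont_of_continuous_on continuous_on_product_of_separate
        continuous_on_plateau continuous_on_time_cutoff)
  show "ext_cont Om T (dx j (dx i (test_function F \<tau>)))" for i j
    unfolding dxx_test_function[abs_def]
    by (intro ext_cont_of_continuous_on continuous_on_product_of_separate
        continuous_on_plateau continuous_on_time_cutoff)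
qed

lemma C21_l0_test_function:
  fixes Om :: "'a::euclidean_space set"
  assumes "open Om" and F: "\<And>p. p \<in> F \<Longrightarrow> snd p > 0 \<and> ball (fst p) (2 * snd p) \<subseteq> Om"
    and "0 < \<tau>" "\<tau> \<le> T"
  shows "C21_l0 Om T (test_function F \<tau>)"
  unfolding C21_l0_def
proof (intro conjI ballI C21_test_function)
  fix x t
  assume "x \<in> frontier Om"
  then have "plateau F x \<le> 0"
    using plateau_le_indicator[OF F, where y=x] \<open>open Om\<close> by (simp add: frontier_def interior_open)
  then show "test_function F \<tau> x t = 0"
    using plateau_bounds[of F x] by (simp add: test_function_def)
next
  fix x
  show "test_function F \<tau> x T = 0"
    using time_cutoff_properties(1)[OF assms(3,4)] by (simp add: test_function_def)
qed

section \<open>The upper bound\<close>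

lemma finite_ball_cover:
  fixes K V :: "'a::metric_space set"
  assumes "compact K" "open V" "K \<subseteq> V"
  obtains F where "finite F" "\<And>p. p \<in> F \<Longrightarrow> snd p > 0 \<and> ball (fst p) (2 * snd p) \<subseteq> V"
    "K \<subseteq> (\<Union>p\<in>F. ball (fst p) (snd p))"
proof -
  have "\<forall>x\<in>K. \<exists>r>0. ball x (2 * r) \<subseteq> V"
  proof
    fix x assume "x \<in> K"
    then obtain e where "e > 0" "ball x e \<subseteq> V"
      using assms open_contains_ball by blast
    then show "\<exists>r>0. ball x (2 * r) \<subseteq> V"
      by (intro exI[of _ "e/2"]) auto
  qed
  then obtain r where r: "\<And>x. x \<in> K \<Longrightarrow> r x > 0 \<and> ball x (2 * r x) \<subseteq> V"
    by metis
  have cover: "K \<subseteq> (\<Union>x\<in>K. ball x (r x))"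
    using r by force
  obtain K' where K': "K' \<subseteq> K" "finite K'" "K \<subseteq> (\<Union>x\<in>K'. ball x (r x))"
    using compactE_image[OF assms(1) _ cover] by blast
  show ?thesis
  proof (rule that[of "(\<lambda>x. (x, r x)) ` K'"])
    show "finite ((\<lambda>x. (x, r x)) ` K')"
      using K'(2) by simp
    show "snd p > 0 \<and> ball (fst p) (2 * snd p) \<subseteq> V" if "p \<in> (\<lambda>x. (x, r x)) ` K'" for p
      using that K'(1) r by force
    show "K \<subseteq> (\<Union>p\<in>(\<lambda>x. (x, r x)) ` K'. ball (fst p) (snd p))"
      using K'(3) by auto
  qed
qed

lemma nn_integral_time_cutoff':
  assumes \<tau>: "0 < \<tau>" "\<tau> \<le> T"
  shows "(\<integral>\<^sup>+ t. ennreal (indicator {0<..<T} t * - time_cutoff' \<tau> t) \<partial>lborel) = 1"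
proof -
  have "((\<lambda>t. - time_cutoff' \<tau> t) has_integral ((- time_cutoff \<tau>) T - (- time_cutoff \<tau>) 0)) {0..T}"
  proof (rule fundamental_theorem_of_calculus)
    show "0 \<le> T"
      using \<tau> by simp
    fix t
    have "DERIV (\<lambda>t. - time_cutoff \<tau> t) t :> - time_cutoff' \<tau> t"
      by (intro DERIV_minus DERIV_time_cutoff)
    then show "((- time_cutoff \<tau>) has_vector_derivative - time_cutoff' \<tau> t) (at t within {0..T})"
      by (simp add: has_real_derivative_iff_has_vector_derivative[symmetric]
          has_field_derivative_at_within fun_Compl_def)
  qed
  then have "((\<lambda>t. - time_cutoff' \<tau> t) has_integral 1) {0<..<T}"
    using has_integral_open_interval[of "\<lambda>t. - time_cutoff' \<tau> t" _ 0 T]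
      time_cutoff_properties(1,2)[OF \<tau>(1)] \<tau> by simp
  then have "(\<integral>\<^sup>+ t. ennreal (indicator {0<..<T} t * - time_cutoff' \<tau> t) \<partial>lborel) = ennreal 1"
    using time_cutoff_properties(5)[OF \<tau>(1)] by (intro nn_integral_has_integral_lebesgue) auto
  then show ?thesis
    by simp
qed

lemma abs_heat_residual_test_function_le:
  assumes F: "\<And>p. p \<in> F \<Longrightarrow> snd p > 0 \<and> ball (fst p) (2 * snd p) \<subseteq> V"
    and \<tau>: "0 < \<tau>" and L: "\<bar>\<Sum>i\<in>Basis. plateau'' F i i x\<bar> \<le> M" and t: "0 \<le> t"
  shows "\<bar>dt (test_function F \<tau>) x t + laplacian (test_function F \<tau>) x t\<bar>
    \<le> indicator V x * - time_cutoff' \<tau> t + indicator {0..\<tau>} t * M"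
proof -
  let ?L = "\<Sum>i\<in>Basis. plateau'' F i i x"
  have "\<bar>plateau F x * time_cutoff' \<tau> t\<bar> \<le> indicator V x * - time_cutoff' \<tau> t"
    using plateau_le_indicator[OF F, where y=x] plateau_bounds[of F x] time_cutoff_properties(5)[OF \<tau>]
    by (simp add: abs_mult mult_right_mono_neg)
  moreover have "\<bar>time_cutoff \<tau> t * ?L\<bar> \<le> indicator {0..\<tau>} t * M"
  proof (cases "t \<le> \<tau>")
    case True
    have "\<bar>time_cutoff \<tau> t * ?L\<bar> \<le> 1 * M"
      unfolding abs_mult using time_cutoff_properties(3,4)[OF \<tau>, of t] L
      by (intro mult_mono) auto
    then show ?thesis
      using True t by simp
  next
    case False
    then show ?thesis
      using time_cutoff_properties(1)[OF \<tau>, of t] by simp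
  qed
  moreover have "dt (test_function F \<tau>) x t + laplacian (test_function F \<tau>) x t
      = plateau F x * time_cutoff' \<tau> t + time_cutoff \<tau> t * ?L"
    by (simp add: dt_test_function laplacian_test_function)
  ultimately show ?thesis
    using abs_triangle_ineq[of "plateau F x * time_cutoff' \<tau> t" "time_cutoff \<tau> t * ?L"] by linarith
qed

text \<open>Since \<open>- time_cutoff' \<tau>\<close> integrates to \<open>1\<close>, the first bound of
  \<open>abs_heat_residual_test_function_le\<close> contributes the measure of \<open>V\<close>; the second one lives on
  \<open>[0, \<tau>]\<close>.\<close>
lemma nn_integral_heat_residual_test_function_le:
  fixes Om V :: "'a::euclidean_space set"
  assumes Om: "open Om" and V: "open V" "V \<subseteq> Om"
    and F: "\<And>p. p \<in> F \<Longrightarrow> snd p > 0 \<and> ball (fst p) (2 * snd p) \<subseteq> V"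
    and \<tau>: "0 < \<tau>" "\<tau> \<le> T"
    and M: "M \<ge> 0" "\<And>x. x \<in> Om \<Longrightarrow> \<bar>\<Sum>i\<in>Basis. plateau'' F i i x\<bar> \<le> M"
  shows "(\<integral>\<^sup>+ p. indicator (Om \<times> {0<..<T}) p * ennreal \<bar>dt (test_function F \<tau>) (fst p) (snd p)
      + laplacian (test_function F \<tau>) (fst p) (snd p)\<bar> \<partial>lborel)
    \<le> emeasure lborel V + emeasure lborel Om * ennreal (M * \<tau>)"
proof -
  define a where "a t = indicator {0<..<T} t * - time_cutoff' \<tau> t" for t
  define b where "b t = indicator {0..\<tau>} t * M" for t
  have a0: "a t \<ge> 0" and b0: "b t \<ge> 0" for t
    using time_cutoff_properties(5)[OF \<tau>(1), of t] M(1) by (simp_all add: a_def b_def indicator_def)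
  have pointwise: "indicator (Om \<times> {0<..<T}) p * ennreal \<bar>dt (test_function F \<tau>) (fst p) (snd p)
      + laplacian (test_function F \<tau>) (fst p) (snd p)\<bar>
    \<le> ennreal (indicator V (fst p) * a (snd p)) + ennreal (indicator Om (fst p) * b (snd p))" for p
  proof (cases "p \<in> Om \<times> {0<..<T}")
    case True
    obtain x t where p: "p = (x, t)"
      by (cases p)
    have x: "x \<in> Om" and t: "0 < t" "t < T"
      using True by (auto simp: p)
    have "ennreal \<bar>dt (test_function F \<tau>) x t + laplacian (test_function F \<tau>) x t\<bar>
        \<le> ennreal (indicator V x * a t + indicator Om x * b t)"
      using abs_heat_residual_test_function_le[OF F \<tau>(1) M(2)[OF x]] x t
      by (intro ennreal_leI) (simp add: a_def b_def)
    also have "\<dots> = ennreal (indicator V x * a t) + ennreal (indicator Om x * b t)"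
      using a0 b0 by (intro ennreal_plus) auto
    finally show ?thesis
      using True by (simp add: p)
  qed simp
  have [measurable]: "V \<in> sets borel" "Om \<in> sets borel" "time_cutoff' \<tau> \<in> borel_measurable borel"
    using V(1) Om by (simp_all add: borel_measurable_continuous_onI continuous_on_time_cutoff)
  have [measurable]: "a \<in> borel_measurable borel" "b \<in> borel_measurable borel"
    unfolding a_def[abs_def] b_def[abs_def] by measurable
  have "(\<integral>\<^sup>+ t. ennreal (a t) \<partial>lborel) = 1"
    unfolding a_def by (rule nn_integral_time_cutoff'[OF \<tau>])
  moreover have "(\<integral>\<^sup>+ t. ennreal (b t) \<partial>lborel) = ennreal (M * \<tau>)"
  proof -
    have "(\<integral>\<^sup>+ t. ennreal (b t) \<partial>lborel) = (\<integral>\<^sup>+ t. ennreal M * indicator {0..\<tau>} t \<partial>lborel)"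
      by (intro nn_integral_cong) (simp add: b_def indicator_def)
    also have "\<dots> = ennreal (M * \<tau>)"
      using \<tau> M(1) by (simp add: nn_integral_cmult_indicator ennreal_mult)
    finally show ?thesis .
  qed
  moreover have "(\<integral>\<^sup>+ p. ennreal (indicator V (fst p) * a (snd p))
        + ennreal (indicator Om (fst p) * b (snd p)) \<partial>lborel)
      = (\<integral>\<^sup>+ p. ennreal (indicator V (fst p) * a (snd p)) \<partial>lborel)
        + (\<integral>\<^sup>+ p. ennreal (indicator Om (fst p) * b (snd p)) \<partial>lborel)"
    by (intro nn_integral_add) (simp_all add: lborel_prod[symmetric])
  moreover have "(\<integral>\<^sup>+ p. indicator (Om \<times> {0<..<T}) p * ennreal \<bar>dt (test_function F \<tau>) (fst p) (snd p)
      + laplacian (test_function F \<tau>) (fst p) (snd p)\<bar> \<partial>lborel)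
    \<le> (\<integral>\<^sup>+ p. ennreal (indicator V (fst p) * a (snd p))
        + ennreal (indicator Om (fst p) * b (snd p)) \<partial>lborel)"
    by (intro nn_integral_mono pointwise)
  ultimately show ?thesis
    by (simp add: nn_integral_indicator_times)
qed

lemma open_neighbourhood_emeasure_le:
  fixes K :: "'a::euclidean_space set"
  assumes "compact K" "open Om" "K \<subseteq> Om" "e > 0"
  obtains V where "open V" "K \<subseteq> V" "V \<subseteq> Om" "emeasure lborel V \<le> emeasure lborel K + ennreal e"
proof -
  have K_borel: "K \<in> sets borel"
    using assms(1) by (simp add: borel_compact)
  obtain V0 where V0: "open V0" "K \<subseteq> V0" "emeasure lborel (V0 - K) \<le> ennreal e"
    using outer_regular_lborel_le[OF K_borel] assms(4) by auto
  have "emeasure lborel (V0 \<inter> Om) \<le> emeasure lborel (K \<union> (V0 - K))"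
    using K_borel V0(1) assms by (intro emeasure_mono) auto
  also have "\<dots> \<le> emeasure lborel K + emeasure lborel (V0 - K)"
    using K_borel V0(1) by (intro emeasure_subadditive) auto
  also have "\<dots> \<le> emeasure lborel K + ennreal e"
    using V0(3) by (rule add_left_mono)
  finally show ?thesis
    using that[of "V0 \<inter> Om"] V0 assms by auto
qed

lemma cap_le_emeasure:
  fixes Om :: "'a::euclidean_space set"
  assumes Om: "open Om" "bounded Om" and T: "T > 0" and K: "compact K" "K \<subseteq> Om"
  shows "cap Om T K \<le> emeasure lborel K"
proof (rule ennreal_le_epsilon)
  fix \<epsilon> :: real
  assume "0 < \<epsilon>"
  obtain V where V: "open V" "K \<subseteq> V" "V \<subseteq> Om"
    and V_measure: "emeasure lborel V \<le> emeasure lborel K + ennreal (\<epsilon> / 2)"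
    using open_neighbourhood_emeasure_le[OF K(1) Om(1) K(2), of "\<epsilon> / 2"] \<open>0 < \<epsilon>\<close> by auto
  obtain F where F: "finite F" "\<And>p. p \<in> F \<Longrightarrow> snd p > 0 \<and> ball (fst p) (2 * snd p) \<subseteq> V"
    and K_cover: "K \<subseteq> (\<Union>p\<in>F. ball (fst p) (snd p))"
    using finite_ball_cover[OF K(1) V(1,2)] by blast
  have "compact (closure Om)"
    using Om(2) by (simp add: compact_closure)
  moreover have "continuous_on (closure Om) (\<lambda>x. \<Sum>i\<in>Basis. plateau'' F i i x)"
    by (intro continuous_on_sum continuous_on_plateau)
  ultimately obtain M where M: "M \<ge> 0" "\<And>x. x \<in> closure Om \<Longrightarrow> norm (\<Sum>i\<in>Basis. plateau'' F i i x) \<le> M"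
    using continuous_on_compact_bound by blast
  define m where "m = measure lborel Om"
  define \<tau> where "\<tau> = min T (\<epsilon> / (2 * (m * M + 1)))"
  have pos: "0 < 2 * (m * M + 1)"
    using M(1) by (simp add: m_def add_nonneg_pos)
  then have \<tau>: "0 < \<tau>" "\<tau> \<le> T"
    using T \<open>0 < \<epsilon>\<close> by (auto simp: \<tau>_def)
  have "\<tau> \<le> \<epsilon> / (2 * (m * M + 1))"
    by (simp add: \<tau>_def)
  then have "\<tau> * (2 * (m * M + 1)) \<le> \<epsilon>"
    by (subst (asm) pos_le_divide_eq[OF pos])
  then have \<tau>_small: "m * (M * \<tau>) \<le> \<epsilon> / 2"
    using \<tau> by (simp add: algebra_simps)
  have "test_function F \<tau> \<in> {\<psi>. C21_l0 Om T \<psi> \<and> (\<exists>U. open U \<and> K \<subseteq> U \<and> (\<forall>x\<in>U. \<psi> x 0 \<ge> 1))}"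
  proof (intro CollectI conjI exI[of _ "\<Union>p\<in>F. ball (fst p) (snd p)"] ballI)
    show "C21_l0 Om T (test_function F \<tau>)"
      using F(2) V(3) by (intro C21_l0_test_function[OF Om(1) _ \<tau>]) blast
    show "1 \<le> test_function F \<tau> x 0" if "x \<in> (\<Union>p\<in>F. ball (fst p) (snd p))" for x
      using that plateau_eq_1[OF F(1)] F(2) time_cutoff_properties(2)[OF \<tau>(1)]
      by (auto simp: test_function_def dist_commute)
  qed (use K_cover in auto)
  then have "cap Om T K \<le> (\<integral>\<^sup>+ p. indicator (Om \<times> {0<..<T}) p * ennreal \<bar>dt (test_function F \<tau>) (fst p) (snd p)
      + laplacian (test_function F \<tau>) (fst p) (snd p)\<bar> \<partial>lborel)"
    unfolding cap_def by (rule INF_lower)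
  also have "\<dots> \<le> emeasure lborel V + emeasure lborel Om * ennreal (M * \<tau>)"
    using M closure_subset by (intro nn_integral_heat_residual_test_function_le[OF Om(1) V(1,3) F(2) \<tau>]) auto
  also have "\<dots> = emeasure lborel V + ennreal (m * (M * \<tau>))"
    using emeasure_bounded_finite[OF Om(2)] M(1) \<tau>(1)
    by (simp add: m_def emeasure_eq_ennreal_measure ennreal_mult)
  also have "\<dots> \<le> emeasure lborel K + ennreal (\<epsilon> / 2) + ennreal (\<epsilon> / 2)"
    using V_measure \<tau>_small by (intro add_mono ennreal_leI) auto
  also have "\<dots> = emeasure lborel K + ennreal \<epsilon>"
    using \<open>0 < \<epsilon>\<close> by (simp add: add.assoc ennreal_plus[symmetric])
  finally show "cap Om T K \<le> emeasure lborel K + ennreal \<epsilon>" .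
qed

theorem theorem2p22:
  fixes Om :: "'a::euclidean_space set" and T :: real and K :: "'a set"
  assumes "open Om" and "connected Om" and "bounded Om" and "T > 0"
    and "compact K" and "K \<subseteq> Om"
  shows "emeasure lborel K = cap Om T K"
proof (rule antisym)
  show "emeasure lborel K \<le> cap Om T K"
    unfolding cap_def
  proof (rule INF_greatest, clarify)
    fix \<psi> U
    assume "C21_l0 Om T \<psi>" "open U" "K \<subseteq> U" "\<forall>x\<in>U. 1 \<le> \<psi> x 0"
    then show "emeasure lborel K \<le> (\<integral>\<^sup>+ p. indicator (Om \<times> {0<..<T}) p *
        ennreal \<bar>dt \<psi> (fst p) (snd p) + laplacian \<psi> (fst p) (snd p)\<bar> \<partial>lborel)"
      using assms by (intro emeasure_le_heat_residual) auto
  qed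
  show "cap Om T K \<le> emeasure lborel K"
    using assms by (intro cap_le_emeasure)
qed

end
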